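(* Let $1\le p<\infty$ and $\eta\in(0,1)$. There exist $\beta\in(1/2,1)$ and $C_2>0$, depending only on $\eta$ (and $p$), such that for every $\varepsilon\in(0,1)$, every $\lambda\in(0,2^{-p})$, every $f\in\mathcal{H}(\mathbb{D})$ and every $\xi\in\mathbb{T}$, setting $$B=\{\alpha\in\mathbb{D}:\ |f(\alpha)|^p<\varepsilon^{2+\frac2p}B_\lambda f(\alpha)\},$$ we have $$\int_{B\cap\Gamma_{1/2}(\xi)}|f(z)|^p\frac{dm(z)}{1-|z|}\ \le\ \varepsilon\, C_2\int_{\Gamma_\beta(\xi)}|f(z)|^p\frac{dm(z)}{1-|z|}.$$
   Context: $\mathbb{D}$ is the unit disc, $\mathbb{T}$ the unit circle, $dm$ normalized area measure, $\mathcal{H}(\mathbb{D})$ the analytic functions on $\mathbb{D}$. For $\beta\in(0,1)$ and $\xi\in\mathbb{T}$, $\Gamma_\beta(\xi)=\{z\in\mathbb{D}:|z|<\beta\}\cup\bigcup_{|z|<\beta}[z,\xi)$, where $[z,\xi)$ is the half-open segment from $z$ to $\xi$. For $\alpha\in\mathbb{D}$, $\Delta_\eta(\alpha)=\{z\in\mathbb{D}:|z-\alpha|<\eta(1-|\alpha|)\}$. For $\lambda\in(0,1)$: $E_\lambda(\alpha)=\{z\in\Delta_\eta(\alpha):|f(z)|^p\ge\lambda|f(\alpha)|^p\}$ and $B_\lambda f(\alpha)=\frac{1}{m(E_\lambda(\alpha))}\int_{E_\lambda(\alpha)}|f(z)|^p\,dm(z)$. *)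

theory Defs
  imports "HOL-Analysis.Analysis"
begin

definition area_m :: "complex set \<Rightarrow> ennreal" where
  "area_m A = emeasure lborel A / ennreal pi"

definition area_int :: "complex set \<Rightarrow> (complex \<Rightarrow> real) \<Rightarrow> ennreal" where
  "area_int S g = (\<integral>\<^sup>+ z. ennreal (g z) * indicator S z \<partial>lborel) / ennreal pi"

definition unit_disc :: "complex set" where
  "unit_disc = ball 0 1"

definition Gamma_reg :: "real \<Rightarrow> complex \<Rightarrow> complex set" where
  "Gamma_reg \<beta> \<xi> = {z. cmod z < \<beta>} \<union> (\<Union>w\<in>{z. cmod z < \<beta>}. closed_segment w \<xi> - {\<xi>})"

definition Delta :: "real \<Rightarrow> complex \<Rightarrow> complex set" where
  "Delta \<eta> \<alpha> = {z \<in> unit_disc. cmod (z - \<alpha>) < \<eta> * (1 - cmod \<alpha>)}"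

definition E_set :: "real \<Rightarrow> real \<Rightarrow> real \<Rightarrow> (complex \<Rightarrow> complex) \<Rightarrow> complex \<Rightarrow> complex set" where
  "E_set p \<eta> lam f \<alpha> = {z \<in> Delta \<eta> \<alpha>. cmod (f z) powr p \<ge> lam * cmod (f \<alpha>) powr p}"

definition B_avg :: "real \<Rightarrow> real \<Rightarrow> real \<Rightarrow> (complex \<Rightarrow> complex) \<Rightarrow> complex \<Rightarrow> ennreal" where
  "B_avg p \<eta> lam f \<alpha> =
     area_int (E_set p \<eta> lam f \<alpha>) (\<lambda>z. cmod (f z) powr p) / area_m (E_set p \<eta> lam f \<alpha>)"

end

theory Submission
  imports Defs "HOL-Complex_Analysis.Complex_Analysis"
begin

text \<open>Cauchy's formula on squares, averaged over the side length, gives the area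
  sub-mean-value inequality \<open>\<bar>f(w)\<bar> \<le> C r\<^sup>-\<^sup>2 \<integral>\<^sub>Q \<bar>f\<bar>\<close>, and Jensen's inequality upgrades it to \<open>\<bar>f\<bar>\<^sup>p\<close>.
  Applied at every point of \<open>\<Delta>\<^sub>\<eta>(\<alpha>)\<close>, it bounds the average \<open>B\<^sub>\<lambda> f(\<alpha>)\<close> by
  \<open>C (1 - \<bar>\<alpha>\<bar>)\<^sup>-\<^sup>2 \<integral>\<^sub>D \<bar>f\<bar>\<^sup>p\<close> with \<open>D\<close> the disc of radius \<open>\<kappa> (1 - \<bar>\<alpha>\<bar>)\<close>, \<open>\<kappa> = (1 + \<eta>)/2\<close>, around \<open>\<alpha>\<close>; on the
  set \<open>B\<close> the same then holds for \<open>\<bar>f(\<alpha>)\<bar>\<^sup>p\<close> with an extra factor \<open>\<epsilon>\<close>. Such discs around points of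
  \<open>\<Gamma>\<^sub>1\<^sub>/\<^sub>2(\<xi>)\<close> stay inside a wider region \<open>\<Gamma>\<^sub>\<beta>(\<xi>)\<close>, and integrating over \<open>\<alpha>\<close> and exchanging the order
  of integration (each \<open>z\<close> is seen only from \<open>\<alpha>\<close> with \<open>1 - \<bar>\<alpha>\<bar> \<approx> 1 - \<bar>z\<bar>\<close> in a disc of area
  \<open>\<approx> (1 - \<bar>z\<bar>)\<^sup>2\<close>) yields the claim.\<close>

section \<open>Sub-mean-value inequality on squares\<close>

lemma has_contour_integral_linepath_same_Im_iff:
  assumes "Im z = c" "Im z' = c" "Re z = a" "Re z' = b" "a < b"
  shows   "(f has_contour_integral I) (linepath z z') \<longleftrightarrow>
             ((\<lambda>x. f (Complex x c)) has_integral I) {a..b}"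
proof -
  have "(f has_contour_integral I) (linepath z z') \<longleftrightarrow>
          ((\<lambda>x. f (linepath z z' x) * (z' - z)) has_integral I) {0..1}"
    by (subst has_contour_integral_linepath) simp_all
  also have "\<dots> \<longleftrightarrow> ((\<lambda>x. f (c *\<^sub>R \<i> + of_real (a + (b - a) * x)) * of_real (b - a)) has_integral I) {0..1}"
    using assms
    by (intro has_integral_cong arg_cong2[of _ _ _ _ "(*)"] arg_cong[of _ _ f])
       (auto simp: linepath_def complex_eq_iff algebra_simps)
  also have "{0..1} = (\<lambda>x. x / (b - a)) ` {0..b-a}"
    using assms by simp
  also have "((\<lambda>x. f (c *\<^sub>R \<i> + of_real (a + (b - a) * x)) * of_real (b - a)) has_integral I) \<dots> \<longleftrightarrow>
             ((\<lambda>x. f (c *\<^sub>R \<i> + of_real (a + x)) * of_real (b - a)) has_integral ((b-a) *\<^sub>R I)) {0..b-a}"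
    by (subst has_integral_stretch_real_iff) (use assms in simp_all)
  also have "\<dots> \<longleftrightarrow> ((\<lambda>x. of_real (b-a) * (f (c *\<^sub>R \<i> + of_real x))) has_integral (b-a) *\<^sub>R I) {a..b}"
    by (subst has_integral_shift_real_ivl_iff[where c = "-a"])
       (simp_all add: scaleR_conv_of_real mult_ac)
  also have "\<dots> \<longleftrightarrow> ((\<lambda>x. f (c *\<^sub>R \<i> + of_real x)) has_integral I) {a..b}"
    by (subst has_integral_mult_right_iff) (use assms in \<open>auto simp: scaleR_conv_of_real\<close>)
  finally show ?thesis
    by (simp add: scaleR_conv_of_real Complex_eq mult.commute add.commute)
qed

lemma norm_contour_integral_linepath_same_Im_le:
  assumes "Im z' = Im z" "Re z < Re z'" and h: "h integrable_on {Re z..Re z'}"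
    and le: "\<And>x. x \<in> {Re z..Re z'} \<Longrightarrow> cmod (g (Complex x (Im z))) \<le> h x"
  shows "cmod (contour_integral (linepath z z') g) \<le> integral {Re z..Re z'} h"
proof (cases "g contour_integrable_on linepath z z'")
  case True
  then have "((\<lambda>x. g (Complex x (Im z))) has_integral contour_integral (linepath z z') g) {Re z..Re z'}"
    using has_contour_integral_integral has_contour_integral_linepath_same_Im_iff assms(1,2) by blast
  then show ?thesis
    by (metis integral_norm_bound_integral has_integral_integrable integral_unique h le)
next
  case False
  have "0 \<le> integral {Re z..Re z'} h"
    using le by (intro integral_nonneg[OF h]) (meson norm_ge_zero order.trans)
  with False show ?thesis by (simp add: not_integrable_contour_integral)
qed

lemma norm_contour_integral_linepath_same_Re_le:
  assumes "Re z' = Re z" "Im z < Im z'" and h: "h integrable_on {Im z..Im z'}"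
    and le: "\<And>y. y \<in> {Im z..Im z'} \<Longrightarrow> cmod (g (Complex (Re z) y)) \<le> h y"
  shows "cmod (contour_integral (linepath z z') g) \<le> integral {Im z..Im z'} h"
proof (cases "g contour_integrable_on linepath z z'")
  case True
  then have "((\<lambda>y. g (Complex (Re z) y)) has_integral (- \<i> * contour_integral (linepath z z') g))
      {Im z..Im z'}"
    using has_contour_integral_integral has_contour_integral_linepath_same_Re_iff assms(1,2) by blast
  then have "cmod (- \<i> * contour_integral (linepath z z') g) \<le> integral {Im z..Im z'} h"
    by (metis integral_norm_bound_integral has_integral_integrable integral_unique h le)
  then show ?thesis by (simp add: norm_mult)
next
  case False
  have "0 \<le> integral {Im z..Im z'} h"
    using le by (intro integral_nonneg[OF h]) (meson norm_ge_zero order.trans)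
  with False show ?thesis by (simp add: not_integrable_contour_integral)
qed

lemma square_subset_ball:
  assumes "2 * r < R"
  shows "cbox (w - Complex r r) (w + Complex r r) \<subseteq> ball w R"
proof
  fix z assume "z \<in> cbox (w - Complex r r) (w + Complex r r)"
  then have "\<bar>Re (z - w)\<bar> \<le> r" "\<bar>Im (z - w)\<bar> \<le> r"
    by (auto simp: in_cbox_complex_iff)
  then have "cmod (z - w) \<le> 2 * r" using cmod_le[of "z - w"] by linarith
  then show "z \<in> ball w R" using assms by (simp add: dist_norm norm_minus_commute)
qed

lemma cauchy_formula_square_sides:
  fixes f :: "complex \<Rightarrow> complex"
  assumes hol: "f holomorphic_on ball w R" and s: "0 < s" "2 * s < R"
  defines "g \<equiv> \<lambda>z. f z / (z - w)"
  shows "2 * pi * \<i> * f w =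
      contour_integral (linepath (Complex (Re w - s) (Im w - s)) (Complex (Re w + s) (Im w - s))) g
    + contour_integral (linepath (Complex (Re w + s) (Im w - s)) (Complex (Re w + s) (Im w + s))) g
    - contour_integral (linepath (Complex (Re w - s) (Im w + s)) (Complex (Re w + s) (Im w + s))) g
    - contour_integral (linepath (Complex (Re w - s) (Im w - s)) (Complex (Re w - s) (Im w + s))) g"
proof -
  define a1 where "a1 = Complex (Re w - s) (Im w - s)"
  define a2 where "a2 = Complex (Re w + s) (Im w - s)"
  define a3 where "a3 = Complex (Re w + s) (Im w + s)"
  define a4 where "a4 = Complex (Re w - s) (Im w + s)"
  have w_box: "w \<in> box a1 a3"
    using s by (auto simp: in_box_complex_iff a1_def a3_def)
  have "a1 = w - Complex s s" "a3 = w + Complex s s"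
    by (simp_all add: a1_def a3_def complex_eq_iff)
  then have square_ball: "cbox a1 a3 \<subseteq> ball w R"
    using square_subset_ball[OF s(2)] by simp
  have "(g has_contour_integral (2 * pi * \<i> * f w)) (rectpath a1 a3)"
  proof -
    have "path_image (rectpath a1 a3) = cbox a1 a3 - box a1 a3"
      by (rule path_image_rectpath_cbox_minus_box) (use s in \<open>auto simp: a1_def a3_def\<close>)
    then have "(g has_contour_integral 2 * pi * \<i> * winding_number (rectpath a1 a3) w * f w)
        (rectpath a1 a3)"
      unfolding g_def using w_box square_ball s
      by (intro Cauchy_integral_formula_convex_simple[OF convex_ball hol]) auto
    then show ?thesis by (simp add: winding_number_rectpath[OF w_box])
  qed
  moreover have corners: "a1 \<in> cbox a1 a3" "a2 \<in> cbox a1 a3" "a3 \<in> cbox a1 a3" "a4 \<in> cbox a1 a3"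
    using s by (auto simp: in_cbox_complex_iff a1_def a2_def a3_def a4_def)
  moreover have sides: "w \<notin> closed_segment a1 a2" "w \<notin> closed_segment a2 a3"
    "w \<notin> closed_segment a4 a3" "w \<notin> closed_segment a1 a4"
    using s by (auto simp: closed_segment_same_Im closed_segment_same_Re a1_def a2_def a3_def a4_def)
  moreover have g_cont: "continuous_on (closed_segment a b) g"
    if "a \<in> cbox a1 a3" "b \<in> cbox a1 a3" "w \<notin> closed_segment a b" for a b
  proof -
    have "closed_segment a b \<subseteq> ball w R - {w}"
      using closed_segment_subset[OF that(1,2) convex_box(1)] square_ball that(3) by blast
    then show ?thesis
      unfolding g_def using holomorphic_on_imp_continuous_on[OF hol]
      by (intro continuous_intros) (auto elim: continuous_on_subset)
  qed
  ultimately have integrable: "g contour_integrable_on linepath a b"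
    if "a \<in> cbox a1 a3" "b \<in> cbox a1 a3" "w \<notin> closed_segment a b" for a b
    using that by (blast intro: contour_integrable_continuous_linepath g_cont)
  have "contour_integral (linepath a3 a4) g = - contour_integral (linepath a4 a3) g"
    "contour_integral (linepath a4 a1) g = - contour_integral (linepath a1 a4) g"
    using corners sides
    by (auto intro!: contour_integral_reverse_linepath g_cont simp: closed_segment_commute)
  moreover have "rectpath a1 a3 = linepath a1 a2 +++ linepath a2 a3 +++ linepath a3 a4 +++ linepath a4 a1"
    by (simp add: rectpath_def Let_def a1_def a2_def a3_def a4_def)
  ultimately have "(g has_contour_integral (contour_integral (linepath a1 a2) g
      + (contour_integral (linepath a2 a3) g + (- contour_integral (linepath a4 a3) g
      + - contour_integral (linepath a1 a4) g)))) (rectpath a1 a3)"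
    using corners sides
    by (metis closed_segment_commute has_contour_integral_integral has_contour_integral_join
        integrable valid_path_join valid_path_linepath pathfinish_linepath pathstart_join pathstart_linepath)
  with \<open>(g has_contour_integral (2 * pi * \<i> * f w)) (rectpath a1 a3)\<close> show ?thesis
    unfolding a1_def a2_def a3_def a4_def using has_contour_integral_unique by fastforce
qed

text \<open>On the boundary of the square of half-side \<open>s\<close> around \<open>w\<close> we have \<open>\<bar>z - w\<bar> \<ge> s\<close>.\<close>
lemma square_boundary_estimate:
  fixes f :: "complex \<Rightarrow> complex"
  assumes hol: "f holomorphic_on ball w R" and s: "0 < s" "2 * s < R"
  shows "2 * pi * s * cmod (f w) \<le>
           integral {Re w - s..Re w + s} (\<lambda>x. cmod (f (Complex x (Im w - s))))
         + integral {Im w - s..Im w + s} (\<lambda>y. cmod (f (Complex (Re w + s) y)))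
         + integral {Re w - s..Re w + s} (\<lambda>x. cmod (f (Complex x (Im w + s))))
         + integral {Im w - s..Im w + s} (\<lambda>y. cmod (f (Complex (Re w - s) y)))"
proof -
  define g where "g = (\<lambda>z. f z / (z - w))"
  have f_cont: "continuous_on (cbox (w - Complex s s) (w + Complex s s)) f"
    using holomorphic_on_imp_continuous_on[OF hol] square_subset_ball[OF s(2)]
    by (rule continuous_on_subset)
  have g_le: "cmod (g z) \<le> cmod (f z) / s" if "\<bar>Re (z - w)\<bar> = s \<or> \<bar>Im (z - w)\<bar> = s" for z
  proof -
    have "s \<le> cmod (z - w)" using that abs_Re_le_cmod abs_Im_le_cmod by metis
    then show ?thesis
      using s by (simp add: g_def norm_divide frac_le)
  qed
  have row: "cmod (contour_integral (linepath (Complex (Re w - s) y) (Complex (Re w + s) y)) g)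
      \<le> integral {Re w - s..Re w + s} (\<lambda>x. cmod (f (Complex x y))) / s"
    if "\<bar>y - Im w\<bar> = s" for y
  proof -
    have "(\<lambda>x. cmod (f (Complex x y))) integrable_on {Re w - s..Re w + s}"
      using that by (intro integrable_continuous_interval continuous_intros
          continuous_on_compose2[OF f_cont]) (auto simp: in_cbox_complex_iff)
    then have "cmod (contour_integral (linepath (Complex (Re w - s) y) (Complex (Re w + s) y)) g)
        \<le> integral {Re (Complex (Re w - s) y)..Re (Complex (Re w + s) y)} (\<lambda>x. cmod (f (Complex x y)) / s)"
      by (intro norm_contour_integral_linepath_same_Im_le) (use that s in \<open>simp_all add: g_le integrable_on_divide\<close>)
    then show ?thesis by simp
  qed
  have column: "cmod (contour_integral (linepath (Complex x (Im w - s)) (Complex x (Im w + s))) g)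
      \<le> integral {Im w - s..Im w + s} (\<lambda>y. cmod (f (Complex x y))) / s"
    if "\<bar>x - Re w\<bar> = s" for x
  proof -
    have "(\<lambda>y. cmod (f (Complex x y))) integrable_on {Im w - s..Im w + s}"
      using that by (intro integrable_continuous_interval continuous_intros
          continuous_on_compose2[OF f_cont]) (auto simp: in_cbox_complex_iff)
    then have "cmod (contour_integral (linepath (Complex x (Im w - s)) (Complex x (Im w + s))) g)
        \<le> integral {Im (Complex x (Im w - s))..Im (Complex x (Im w + s))} (\<lambda>y. cmod (f (Complex x y)) / s)"
      by (intro norm_contour_integral_linepath_same_Re_le) (use that s in \<open>simp_all add: g_le integrable_on_divide\<close>)
    then show ?thesis by simp
  qed
  have "2 * pi * cmod (f w) = cmod (2 * pi * \<i> * f w)"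
    by (simp add: norm_mult)
  also have "\<dots> \<le>
      cmod (contour_integral (linepath (Complex (Re w - s) (Im w - s)) (Complex (Re w + s) (Im w - s))) g)
    + cmod (contour_integral (linepath (Complex (Re w + s) (Im w - s)) (Complex (Re w + s) (Im w + s))) g)
    + cmod (contour_integral (linepath (Complex (Re w - s) (Im w + s)) (Complex (Re w + s) (Im w + s))) g)
    + cmod (contour_integral (linepath (Complex (Re w - s) (Im w - s)) (Complex (Re w - s) (Im w + s))) g)"
    unfolding cauchy_formula_square_sides[OF hol s] g_def
    by (smt (verit) norm_triangle_ineq4 norm_triangle_ineq)
  also have "\<dots> \<le> (integral {Re w - s..Re w + s} (\<lambda>x. cmod (f (Complex x (Im w - s))))
         + integral {Im w - s..Im w + s} (\<lambda>y. cmod (f (Complex (Re w + s) y)))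
         + integral {Re w - s..Re w + s} (\<lambda>x. cmod (f (Complex x (Im w + s))))
         + integral {Im w - s..Im w + s} (\<lambda>y. cmod (f (Complex (Re w - s) y)))) / s"
    using row[of "Im w - s"] row[of "Im w + s"] column[of "Re w + s"] column[of "Re w - s"] s
    by (simp add: add_divide_distrib complex_eq_iff)
  finally show ?thesis
    using s by (simp add: field_simps)
qed

lemma measurable_Complex_pair [measurable]:
  "(\<lambda>p::real \<times> real. Complex (fst p) (snd p)) \<in> borel_measurable borel"
  by (intro borel_measurable_continuous_onI continuous_intros)

lemma measurable_Complex [measurable (raw)]:
  assumes "f \<in> M \<rightarrow>\<^sub>M borel" "g \<in> M \<rightarrow>\<^sub>M borel"
  shows "(\<lambda>x. Complex (f x) (g x)) \<in> M \<rightarrow>\<^sub>M borel"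
proof -
  have "(\<lambda>x. (f x, g x)) \<in> M \<rightarrow>\<^sub>M borel" using assms by measurable
  from measurable_compose[OF this measurable_Complex_pair] show ?thesis by simp
qed

lemma lborel_complex_eq_distr_pair:
  "(lborel :: complex measure) = distr (lborel \<Otimes>\<^sub>M lborel) borel (\<lambda>p. Complex (fst p) (snd p))"
proof (rule lborel_eqI)
  fix l u :: complex assume le: "\<And>b. b \<in> Basis \<Longrightarrow> l \<bullet> b \<le> u \<bullet> b"
  have m: "(\<lambda>p::real \<times> real. Complex (fst p) (snd p)) \<in> (lborel \<Otimes>\<^sub>M lborel) \<rightarrow>\<^sub>M borel"
    by (simp add: lborel_prod)
  have "(\<lambda>p::real \<times> real. Complex (fst p) (snd p)) -` box l u \<inter> space (lborel \<Otimes>\<^sub>M lborel)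
      = {Re l<..<Re u} \<times> {Im l<..<Im u}"
    by (auto simp: in_box_complex_iff space_pair_measure)
  then show "emeasure (distr (lborel \<Otimes>\<^sub>M lborel) borel (\<lambda>p. Complex (fst p) (snd p))) (box l u)
      = (\<Prod>b\<in>Basis. (u - l) \<bullet> b)"
    using le[of 1] le[of \<i>]
    by (simp add: emeasure_distr[OF m] lborel.emeasure_pair_measure_Times Basis_complex_def ennreal_mult)
qed simp

lemma nn_integral_complex_Re_Im:
  assumes [measurable]: "g \<in> borel_measurable borel"
  shows "(\<integral>\<^sup>+z. g z \<partial>lborel) = (\<integral>\<^sup>+x. (\<integral>\<^sup>+y. g (Complex x y) \<partial>lborel) \<partial>lborel)"
proof -
  have "(\<integral>\<^sup>+z. g z \<partial>lborel) = (\<integral>\<^sup>+p. g (Complex (fst p) (snd p)) \<partial>(lborel \<Otimes>\<^sub>M lborel))"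
    by (subst lborel_complex_eq_distr_pair) (simp add: nn_integral_distr lborel_prod)
  also have "\<dots> = (\<integral>\<^sup>+x. (\<integral>\<^sup>+y. g (Complex x y) \<partial>lborel) \<partial>lborel)"
    by (subst lborel.nn_integral_fst[symmetric]) (auto simp: lborel_prod)
  finally show ?thesis .
qed

lemma nn_integral_complex_Im_Re:
  assumes [measurable]: "g \<in> borel_measurable borel"
  shows "(\<integral>\<^sup>+z. g z \<partial>lborel) = (\<integral>\<^sup>+y. (\<integral>\<^sup>+x. g (Complex x y) \<partial>lborel) \<partial>lborel)"
  unfolding nn_integral_complex_Re_Im[OF assms]
  by (rule pair_sigma_finite.Fubini'[symmetric])
     (auto simp: split_beta' lborel_prod pair_sigma_finite_def lborel.sigma_finite_measure_axioms)

lemma nn_integral_reflect_translate_le: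
  fixes F :: "real \<Rightarrow> ennreal"
  assumes [measurable]: "F \<in> borel_measurable borel" and "c = 1 \<or> c = -1"
  shows "(\<integral>\<^sup>+s. F (v + c * s) * indicator A s \<partial>lborel) \<le> (\<integral>\<^sup>+y. F y \<partial>lborel)"
proof -
  have "(\<integral>\<^sup>+y. F y \<partial>lborel) = ennreal \<bar>c\<bar> * (\<integral>\<^sup>+s. F (v + c * s) \<partial>lborel)"
    by (rule nn_integral_real_affine) (use assms in auto)
  also have "\<dots> = (\<integral>\<^sup>+s. F (v + c * s) \<partial>lborel)"
    using assms by auto
  finally show ?thesis
    by (auto intro!: nn_integral_mono simp: indicator_def)
qed

lemma ennreal_integral_eq_nn_integral:
  fixes h :: "real \<Rightarrow> real"
  assumes "continuous_on {a..b} h" "\<And>x. x \<in> {a..b} \<Longrightarrow> 0 \<le> h x"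
  shows "ennreal (integral {a..b} h) = (\<integral>\<^sup>+x. ennreal (h x) * indicator {a..b} x \<partial>lborel)"
  using nn_integral_has_integral_lebesgue'[OF assms(2)
      integrable_integral[OF integrable_continuous_interval[OF assms(1)]]]
  by simp

lemma square_boundary_estimate_nn:
  fixes f :: "complex \<Rightarrow> complex"
  assumes hol: "f holomorphic_on ball w R" and s: "0 < s" "2 * s < R"
  shows "ennreal (2 * pi * s * cmod (f w)) \<le>
      (\<integral>\<^sup>+x. ennreal (cmod (f (Complex x (Im w - s)))) * indicator {Re w - s..Re w + s} x \<partial>lborel)
    + (\<integral>\<^sup>+y. ennreal (cmod (f (Complex (Re w + s) y))) * indicator {Im w - s..Im w + s} y \<partial>lborel)
    + (\<integral>\<^sup>+x. ennreal (cmod (f (Complex x (Im w + s)))) * indicator {Re w - s..Re w + s} x \<partial>lborel)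
    + (\<integral>\<^sup>+y. ennreal (cmod (f (Complex (Re w - s) y))) * indicator {Im w - s..Im w + s} y \<partial>lborel)"
proof -
  have f_cont: "continuous_on (cbox (w - Complex s s) (w + Complex s s)) f"
    using holomorphic_on_imp_continuous_on[OF hol] square_subset_ball[OF s(2)]
    by (rule continuous_on_subset)
  have row: "ennreal (integral {Re w - s..Re w + s} (\<lambda>x. cmod (f (Complex x y))))
      = (\<integral>\<^sup>+x. ennreal (cmod (f (Complex x y))) * indicator {Re w - s..Re w + s} x \<partial>lborel)"
    if "\<bar>y - Im w\<bar> = s" for y
    using that by (intro ennreal_integral_eq_nn_integral continuous_intros
        continuous_on_compose2[OF f_cont]) (auto simp: in_cbox_complex_iff)
  have column: "ennreal (integral {Im w - s..Im w + s} (\<lambda>y. cmod (f (Complex x y))))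
      = (\<integral>\<^sup>+y. ennreal (cmod (f (Complex x y))) * indicator {Im w - s..Im w + s} y \<partial>lborel)"
    if "\<bar>x - Re w\<bar> = s" for x
    using that by (intro ennreal_integral_eq_nn_integral continuous_intros
        continuous_on_compose2[OF f_cont]) (auto simp: in_cbox_complex_iff)
  have nonneg: "0 \<le> integral S (\<lambda>t::real. cmod (f (h t)))" for S h
    by (cases "(\<lambda>t. cmod (f (h t))) integrable_on S")
       (auto intro: integral_nonneg simp: not_integrable_integral)
  have "ennreal (2 * pi * s * cmod (f w)) \<le> ennreal
        (integral {Re w - s..Re w + s} (\<lambda>x. cmod (f (Complex x (Im w - s))))
       + integral {Im w - s..Im w + s} (\<lambda>y. cmod (f (Complex (Re w + s) y)))
       + integral {Re w - s..Re w + s} (\<lambda>x. cmod (f (Complex x (Im w + s))))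
       + integral {Im w - s..Im w + s} (\<lambda>y. cmod (f (Complex (Re w - s) y))))"
    by (intro ennreal_leI square_boundary_estimate[OF hol s])
  also have "\<dots> = ennreal (integral {Re w - s..Re w + s} (\<lambda>x. cmod (f (Complex x (Im w - s)))))
       + ennreal (integral {Im w - s..Im w + s} (\<lambda>y. cmod (f (Complex (Re w + s) y))))
       + ennreal (integral {Re w - s..Re w + s} (\<lambda>x. cmod (f (Complex x (Im w + s)))))
       + ennreal (integral {Im w - s..Im w + s} (\<lambda>y. cmod (f (Complex (Re w - s) y))))"
    by (simp add: nonneg add_nonneg_nonneg)
  finally show ?thesis
    using s by (simp add: row column)
qed

lemma nn_integral_square_slices_bound:
  fixes g :: "complex \<Rightarrow> ennreal" and r :: real
  assumes [measurable]: "g \<in> borel_measurable borel" and r: "0 \<le> r"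
    and slices: "\<And>s. s \<in> {r/2..r} \<Longrightarrow> X \<le>
      (\<integral>\<^sup>+x. g (Complex x (v - s)) \<partial>lborel) + (\<integral>\<^sup>+y. g (Complex (u + s) y) \<partial>lborel)
    + (\<integral>\<^sup>+x. g (Complex x (v + s)) \<partial>lborel) + (\<integral>\<^sup>+y. g (Complex (u - s) y) \<partial>lborel)"
  shows "X * ennreal (r / 2) \<le> 4 * (\<integral>\<^sup>+z. g z \<partial>lborel)"
proof -
  define row where "row y = (\<integral>\<^sup>+x. g (Complex x y) \<partial>lborel)" for y
  define col where "col x = (\<integral>\<^sup>+y. g (Complex x y) \<partial>lborel)" for x
  have [measurable]: "row \<in> borel_measurable borel" "col \<in> borel_measurable borel"
    unfolding row_def[abs_def] col_def[abs_def] by measurable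
  have row_le: "(\<integral>\<^sup>+s. row (v + c * s) * indicator A s \<partial>lborel) \<le> (\<integral>\<^sup>+z. g z \<partial>lborel)"
    if "c = 1 \<or> c = -1" for v c A
    unfolding nn_integral_complex_Im_Re[of g, simplified] row_def[symmetric]
    using that by (intro nn_integral_reflect_translate_le) simp_all
  have col_le: "(\<integral>\<^sup>+s. col (u + c * s) * indicator A s \<partial>lborel) \<le> (\<integral>\<^sup>+z. g z \<partial>lborel)"
    if "c = 1 \<or> c = -1" for u c A
    unfolding nn_integral_complex_Re_Im[of g, simplified] col_def[symmetric]
    using that by (intro nn_integral_reflect_translate_le) simp_all
  have "X * ennreal (r / 2) = (\<integral>\<^sup>+s. X * indicator {r/2..r} s \<partial>lborel)"
    using r by (simp add: nn_integral_cmult_indicator)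
  also have "\<dots> \<le> (\<integral>\<^sup>+s. (row (v + (-1) * s) * indicator {r/2..r} s
        + col (u + 1 * s) * indicator {r/2..r} s)
      + (row (v + 1 * s) * indicator {r/2..r} s
        + col (u + (-1) * s) * indicator {r/2..r} s) \<partial>lborel)"
    using slices by (intro nn_integral_mono) (auto simp: indicator_def add.assoc row_def col_def)
  also have "\<dots> = ((\<integral>\<^sup>+s. row (v + (-1) * s) * indicator {r/2..r} s \<partial>lborel)
        + (\<integral>\<^sup>+s. col (u + 1 * s) * indicator {r/2..r} s \<partial>lborel))
      + ((\<integral>\<^sup>+s. row (v + 1 * s) * indicator {r/2..r} s \<partial>lborel)
        + (\<integral>\<^sup>+s. col (u + (-1) * s) * indicator {r/2..r} s \<partial>lborel))"
    by (simp add: nn_integral_add)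
  also have "\<dots> \<le> ((\<integral>\<^sup>+z. g z \<partial>lborel) + (\<integral>\<^sup>+z. g z \<partial>lborel))
      + ((\<integral>\<^sup>+z. g z \<partial>lborel) + (\<integral>\<^sup>+z. g z \<partial>lborel))"
    by (intro add_mono row_le col_le) auto
  also have "\<dots> = 4 * (\<integral>\<^sup>+z. g z \<partial>lborel)"
    by (simp add: mult_2[symmetric] mult.assoc[symmetric])
  finally show ?thesis .
qed

lemma norm_le_square_average:
  fixes f :: "complex \<Rightarrow> complex"
  assumes hol: "f holomorphic_on ball w R" and r: "0 < r" "2 * r < R"
  shows "ennreal (cmod (f w)) \<le> ennreal (8 / (pi * r^2)) *
     (\<integral>\<^sup>+z. ennreal (cmod (f z)) * indicator (cbox (w - Complex r r) (w + Complex r r)) z \<partial>lborel)"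
proof -
  define Q where "Q = cbox (w - Complex r r) (w + Complex r r)"
  define g where "g z = ennreal (cmod (f z)) * indicator Q z" for z
  have f_cont: "continuous_on Q f"
    using holomorphic_on_imp_continuous_on[OF hol] square_subset_ball[OF r(2)]
    unfolding Q_def by (rule continuous_on_subset)
  have "(\<lambda>z. indicator Q z *\<^sub>R cmod (f z)) \<in> borel_measurable borel"
    by (intro borel_measurable_continuous_on_indicator continuous_intros f_cont) (simp add: Q_def)
  then have "(\<lambda>z. ennreal (indicator Q z *\<^sub>R cmod (f z))) \<in> borel_measurable borel"
    by measurable
  also have "(\<lambda>z. ennreal (indicator Q z *\<^sub>R cmod (f z))) = g"
    by (auto simp: g_def indicator_def)
  finally have g: "g \<in> borel_measurable borel" .
  have "ennreal (pi * r * cmod (f w)) * ennreal (r / 2) \<le> 4 * (\<integral>\<^sup>+z. g z \<partial>lborel)"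
  proof (rule nn_integral_square_slices_bound[OF g])
    fix s assume s: "s \<in> {r/2..r}"
    then have "0 < s" "2 * s < R" using r by auto
    have "ennreal (2 * pi * s * cmod (f w))
      \<le> (\<integral>\<^sup>+x. g (Complex x (Im w - s)) \<partial>lborel) + (\<integral>\<^sup>+y. g (Complex (Re w + s) y) \<partial>lborel)
      + (\<integral>\<^sup>+x. g (Complex x (Im w + s)) \<partial>lborel) + (\<integral>\<^sup>+y. g (Complex (Re w - s) y) \<partial>lborel)"
      using s by (intro order.trans[OF square_boundary_estimate_nn[OF hol \<open>0 < s\<close> \<open>2 * s < R\<close>]]
          add_mono nn_integral_mono) (auto simp: g_def Q_def indicator_def in_cbox_complex_iff)
    moreover have "ennreal (pi * r * cmod (f w)) \<le> ennreal (2 * pi * s * cmod (f w))"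
      using s by (intro ennreal_leI mult_right_mono) auto
    ultimately show "ennreal (pi * r * cmod (f w))
      \<le> (\<integral>\<^sup>+x. g (Complex x (Im w - s)) \<partial>lborel) + (\<integral>\<^sup>+y. g (Complex (Re w + s) y) \<partial>lborel)
      + (\<integral>\<^sup>+x. g (Complex x (Im w + s)) \<partial>lborel) + (\<integral>\<^sup>+y. g (Complex (Re w - s) y) \<partial>lborel)"
      by (rule order.trans[rotated])
  qed (use r in simp)
  then have "ennreal (pi * r * cmod (f w) * (r / 2)) \<le> 4 * (\<integral>\<^sup>+z. g z \<partial>lborel)"
    using r by (subst ennreal_mult) auto
  then have "ennreal (2 / (pi * r^2)) * ennreal (pi * r * cmod (f w) * (r / 2))
      \<le> ennreal (2 / (pi * r^2)) * (4 * (\<integral>\<^sup>+z. g z \<partial>lborel))"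
    by (rule mult_left_mono) simp
  moreover have "ennreal (2 / (pi * r^2)) * ennreal (pi * r * cmod (f w) * (r / 2)) = ennreal (cmod (f w))"
    using r by (simp flip: ennreal_mult add: power2_eq_square field_simps)
  moreover have "ennreal (2 / (pi * r^2)) * (4 * T) = ennreal (8 / (pi * r^2)) * T" for T
    by (simp add: mult.assoc[symmetric] ennreal_mult'[symmetric] ennreal_numeral[symmetric]
        del: ennreal_numeral)
  ultimately show ?thesis by (simp add: g_def Q_def)
qed

lemma powr_tangent_line_le:
  fixes x a p :: real
  assumes x: "0 \<le> x" and a: "0 \<le> a" and p: "1 \<le> p"
  shows "p * a powr (p-1) * x \<le> x powr p + (p-1) * a powr p"
proof (cases "x = 0 \<or> a = 0")
  case True then show ?thesis using p a by auto
next
  case False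
  then have xa: "0 < x" "0 < a" using x a by auto
  have "(x powr p) powr (1/p) * (a powr p) powr (1 - 1/p) \<le> (1/p) * x powr p + (1 - 1/p) * a powr p"
    by (rule Youngs_inequality_0) (use p xa in \<open>auto simp: field_simps\<close>)
  moreover have "(x powr p) powr (1/p) = x" using p xa by (simp add: powr_powr)
  moreover have "(a powr p) powr (1 - 1/p) = a powr (p - 1)"
  proof -
    have "p * (1 - 1/p) = p - 1" using p by (simp add: field_simps)
    then show ?thesis using xa by (simp add: powr_powr)
  qed
  ultimately have "x * a powr (p-1) \<le> (1/p) * x powr p + (1 - 1/p) * a powr p" by simp
  then have "p * (x * a powr (p-1)) \<le> p * ((1/p) * x powr p + (1 - 1/p) * a powr p)"
    using p by (intro mult_left_mono) auto
  moreover have "p * ((1/p) * x powr p + (1 - 1/p) * a powr p) = x powr p + (p-1) * a powr p"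
    using p by (simp add: field_simps)
  moreover have "p * a powr (p-1) * x = p * (x * a powr (p-1))" by (simp only: mult_ac)
  ultimately show ?thesis by linarith
qed

text \<open>Jensen's inequality for \<open>t \<mapsto> t powr p\<close>, obtained by integrating the tangent line at the
  average \<open>a\<close> of \<open>g\<close> over \<open>Q\<close>.\<close>
lemma average_powr_le_nn_integral_powr:
  fixes g :: "'a::euclidean_space \<Rightarrow> real"
  assumes [measurable]: "g \<in> borel_measurable borel" and g: "\<And>z. 0 \<le> g z"
    and [measurable]: "Q \<in> sets borel" and Q: "emeasure lborel Q = ennreal m" and m: "0 < m"
    and average: "(\<integral>\<^sup>+z. ennreal (g z) * indicator Q z \<partial>lborel) = ennreal (a * m)"
    and a: "0 \<le> a" and p: "1 \<le> p"
  shows "ennreal (a powr p * m) \<le> (\<integral>\<^sup>+z. ennreal (g z powr p) * indicator Q z \<partial>lborel)"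
proof -
  define X where "X = (\<integral>\<^sup>+z. ennreal (g z powr p) * indicator Q z \<partial>lborel)"
  have tangent: "ennreal (p * a powr (p-1)) * ennreal (g z)
      \<le> ennreal (g z powr p) + ennreal ((p-1) * a powr p)" for z
    using powr_tangent_line_le[OF g a p] g[of z] a p
    by (simp add: ennreal_leI flip: ennreal_mult ennreal_plus)
  have "ennreal (p * a powr (p-1)) * ennreal (a * m)
      = (\<integral>\<^sup>+z. ennreal (p * a powr (p-1)) * (ennreal (g z) * indicator Q z) \<partial>lborel)"
    by (simp add: average nn_integral_cmult)
  also have "\<dots> \<le> (\<integral>\<^sup>+z. ennreal (g z powr p) * indicator Q z + ennreal ((p-1) * a powr p) * indicator Q z \<partial>lborel)"
    using tangent by (intro nn_integral_mono) (auto simp: indicator_def)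
  also have "\<dots> = X + ennreal ((p-1) * a powr p * m)"
    using a p m by (simp add: X_def nn_integral_add nn_integral_cmult_indicator Q ennreal_mult)
  finally have "ennreal (p * a powr (p-1)) * ennreal (a * m) \<le> X + ennreal ((p-1) * a powr p * m)" .
  moreover have "a powr (p-1) * a = a powr p"
    using a p by (cases "a = 0") (auto simp: powr_diff)
  then have "p * a powr (p-1) * (a * m) = (p-1) * a powr p * m + a powr p * m"
    by (metis (no_types, opaque_lifting) mult.assoc mult.commute diff_add_cancel distrib_right mult_1)
  then have "ennreal (p * a powr (p-1)) * ennreal (a * m)
      = ennreal ((p-1) * a powr p * m) + ennreal (a powr p * m)"
    using a p m by (simp flip: ennreal_mult ennreal_plus)
  ultimately show ?thesis
    by (simp add: X_def add.commute ennreal_add_left_cancel_le)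
qed

lemma norm_powr_le_square_average:
  fixes f :: "complex \<Rightarrow> complex"
  assumes hol: "f holomorphic_on ball w R" and r: "0 < r" "2 * r < R" and p: "1 \<le> p"
  shows "ennreal (cmod (f w) powr p) \<le> ennreal ((32/pi) powr p / (4 * r^2)) *
     (\<integral>\<^sup>+z. ennreal (cmod (f z) powr p) * indicator (cbox (w - Complex r r) (w + Complex r r)) z \<partial>lborel)"
proof -
  define Q where "Q = cbox (w - Complex r r) (w + Complex r r)"
  define g where "g z = indicator Q z * cmod (f z)" for z
  define m where "m = 4 * r^2"
  have m: "0 < m" using r by (simp add: m_def)
  have Q_measure: "emeasure lborel Q = ennreal m"
    using r by (simp add: Q_def emeasure_lborel_cbox_eq Basis_complex_def m_def power2_eq_square)
  have f_cont: "continuous_on Q f"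
    using holomorphic_on_imp_continuous_on[OF hol] square_subset_ball[OF r(2)]
    unfolding Q_def by (rule continuous_on_subset)
  have g_measurable: "g \<in> borel_measurable borel"
    using borel_measurable_continuous_on_indicator[of Q "\<lambda>z. cmod (f z)"] continuous_on_norm[OF f_cont]
    by (simp add: g_def[abs_def] Q_def)
  have g_Q: "ennreal (h (g z)) * indicator Q z = ennreal (h (cmod (f z))) * indicator Q z" for h z
    by (simp add: g_def indicator_def)
  define T where "T = (\<integral>\<^sup>+z. ennreal (cmod (f z)) * indicator Q z \<partial>lborel)"
  obtain B where B: "\<And>z. z \<in> Q \<Longrightarrow> cmod (f z) \<le> B"
    using compact_continuous_image[OF continuous_on_norm[OF f_cont]] compact_imp_bounded bounded_real
    unfolding Q_def by (metis compact_cbox image_eqI abs_le_D1)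
  have "T \<le> (\<integral>\<^sup>+z. ennreal B * indicator Q z \<partial>lborel)"
    unfolding T_def by (intro nn_integral_mono) (auto simp: B ennreal_leI indicator_def)
  also have "\<dots> = ennreal B * ennreal m"
    by (simp add: nn_integral_cmult_indicator Q_def Q_measure[unfolded Q_def])
  also have "\<dots> < \<infinity>"
    by (simp add: ennreal_mult_less_top)
  finally obtain t where t: "T = ennreal t" "0 \<le> t"
    by (cases T) auto
  define a where "a = t / m"
  have a: "0 \<le> a" "t = a * m" using t m by (simp_all add: a_def)
  have "ennreal (a powr p * m) \<le> (\<integral>\<^sup>+z. ennreal (g z powr p) * indicator Q z \<partial>lborel)"
    using g_Q[of id] t unfolding T_def
    by (intro average_powr_le_nn_integral_powr[OF g_measurable _ _ Q_measure m _ a(1) p])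
       (auto simp: g_def Q_def a(2))
  also have "\<dots> = (\<integral>\<^sup>+z. ennreal (cmod (f z) powr p) * indicator Q z \<partial>lborel)"
    using g_Q[of "\<lambda>x. x powr p"] by simp
  finally have average: "ennreal (a powr p * m) \<le> (\<integral>\<^sup>+z. ennreal (cmod (f z) powr p) * indicator Q z \<partial>lborel)" .
  have "ennreal (cmod (f w)) \<le> ennreal (8 / (pi * r^2)) * T"
    using norm_le_square_average[OF hol r] by (simp add: T_def Q_def)
  also have "\<dots> = ennreal (8 / (pi * r^2) * t)"
    using t by (subst ennreal_mult) auto
  finally have "cmod (f w) \<le> 8 / (pi * r^2) * t"
    using t r by (subst (asm) ennreal_le_iff) auto
  also have "\<dots> = (32/pi) * a" using r by (simp add: a m_def field_simps)
  finally have "cmod (f w) powr p \<le> ((32/pi) * a) powr p"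
    using p by (intro powr_mono2) auto
  also have "\<dots> = (32/pi) powr p / m * (a powr p * m)"
    using a m powr_mult[of "32/pi" a p] by simp
  finally have "ennreal (cmod (f w) powr p) \<le> ennreal ((32/pi) powr p / m) * ennreal (a powr p * m)"
    using a m by (simp flip: ennreal_mult add: ennreal_leI)
  also have "\<dots> \<le> ennreal ((32/pi) powr p / m) * (\<integral>\<^sup>+z. ennreal (cmod (f z) powr p) * indicator Q z \<partial>lborel)"
    using average by (rule mult_left_mono) simp
  finally show ?thesis by (simp add: m_def Q_def)
qed

section \<open>The approach regions\<close>

lemma norm_one_minus_of_real [simp]: "cmod (1 - complex_of_real s) = \<bar>1 - s\<bar>"
  by (metis norm_of_real of_real_1 of_real_diff)

lemma Gamma_reg_iff:
  assumes "cmod \<xi> = 1" "\<beta> \<le> 1"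
  shows "z \<in> Gamma_reg \<beta> \<xi> \<longleftrightarrow>
    (\<exists>w (s::real). cmod w < \<beta> \<and> 0 \<le> s \<and> s < 1 \<and> z = of_real (1 - s) * w + of_real s * \<xi>)"
proof
  assume "z \<in> Gamma_reg \<beta> \<xi>"
  then consider "cmod z < \<beta>" | w where "cmod w < \<beta>" "z \<in> closed_segment w \<xi>" "z \<noteq> \<xi>"
    by (auto simp: Gamma_reg_def)
  then show "\<exists>w (s::real). cmod w < \<beta> \<and> 0 \<le> s \<and> s < 1 \<and> z = of_real (1 - s) * w + of_real s * \<xi>"
  proof cases
    case 1
    then show ?thesis by (intro exI[of _ z] exI[of _ 0]) simp
  next
    case 2
    then obtain s where "0 \<le> s" "s \<le> 1" "z = (1 - s) *\<^sub>R w + s *\<^sub>R \<xi>"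
      by (auto simp: in_segment)
    moreover from this 2 have "s \<noteq> 1" by auto
    ultimately show ?thesis using 2
      by (intro exI[of _ w] exI[of _ s]) (auto simp: scaleR_conv_of_real)
  qed
next
  assume "\<exists>w (s::real). cmod w < \<beta> \<and> 0 \<le> s \<and> s < 1 \<and> z = of_real (1 - s) * w + of_real s * \<xi>"
  then obtain w and s :: real
    where w: "cmod w < \<beta>" and s: "0 \<le> s" "s < 1" and z: "z = of_real (1 - s) * w + of_real s * \<xi>"
    by blast
  have "z \<in> closed_segment w \<xi>"
    using s z by (auto simp: in_segment scaleR_conv_of_real)
  moreover have "z \<noteq> \<xi>"
  proof
    assume "z = \<xi>"
    then have "of_real (1 - s) * (w - \<xi>) = 0" using z by (simp add: algebra_simps)
    then show False using s w assms by auto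
  qed
  ultimately show "z \<in> Gamma_reg \<beta> \<xi>"
    using w unfolding Gamma_reg_def by blast
qed

lemma Gamma_reg_subset_unit_disc:
  assumes "cmod \<xi> = 1" "\<beta> \<le> 1"
  shows "Gamma_reg \<beta> \<xi> \<subseteq> unit_disc"
proof
  fix z assume "z \<in> Gamma_reg \<beta> \<xi>"
  then obtain w and s :: real
    where ws: "cmod w < \<beta>" "0 \<le> s" "s < 1" "z = of_real (1 - s) * w + of_real s * \<xi>"
    using Gamma_reg_iff[OF assms] by blast
  have "cmod z \<le> (1 - s) * cmod w + s"
    using ws(2,3) norm_triangle_ineq[of "of_real (1 - s) * w" "of_real s * \<xi>"]
    by (simp add: ws(4) norm_mult assms(1))
  also have "\<dots> < (1 - s) * 1 + s"
    using ws assms(2) by (intro add_strict_right_mono mult_strict_left_mono) auto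
  finally show "z \<in> unit_disc" by (simp add: unit_disc_def)
qed

lemma open_Gamma_reg:
  assumes "cmod \<xi> = 1" "\<beta> \<le> 1"
  shows "open (Gamma_reg \<beta> \<xi>)"
proof -
  have affine: "s *\<^sub>R \<xi> + (1 - s) *\<^sub>R w = of_real (1 - s) * w + of_real s * \<xi>" for s w
    by (simp add: scaleR_conv_of_real)
  have "Gamma_reg \<beta> \<xi> = (\<Union>s\<in>{0..<1::real}. (\<lambda>w. s *\<^sub>R \<xi> + (1 - s) *\<^sub>R w) ` ball 0 \<beta>)"
  proof (intro set_eqI iffI)
    fix z assume "z \<in> Gamma_reg \<beta> \<xi>"
    then obtain w and s :: real
      where "cmod w < \<beta>" "0 \<le> s" "s < 1" "z = of_real (1 - s) * w + of_real s * \<xi>"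
      using Gamma_reg_iff[OF assms] by blast
    then show "z \<in> (\<Union>s\<in>{0..<1::real}. (\<lambda>w. s *\<^sub>R \<xi> + (1 - s) *\<^sub>R w) ` ball 0 \<beta>)"
      by (intro UN_I[of s] image_eqI[of _ _ w]) (simp_all only: affine, auto)
  next
    fix z assume "z \<in> (\<Union>s\<in>{0..<1::real}. (\<lambda>w. s *\<^sub>R \<xi> + (1 - s) *\<^sub>R w) ` ball 0 \<beta>)"
    then obtain s w where "s \<in> {0..<1}" "w \<in> ball 0 \<beta>" "z = s *\<^sub>R \<xi> + (1 - s) *\<^sub>R w"
      by blast
    then show "z \<in> Gamma_reg \<beta> \<xi>"
      unfolding Gamma_reg_iff[OF assms] affine by auto
  qed
  then show ?thesis
    by (simp add: open_UN open_affinity)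
qed

lemma mult_cnj_eq_1: "cmod \<xi> = 1 \<Longrightarrow> \<xi> * cnj \<xi> = 1"
  by (metis complex_norm_square of_real_1 power_one)

lemma rotate_mem_Gamma_reg_iff:
  assumes \<xi>: "cmod \<xi> = 1" and "\<beta> \<le> 1"
  shows "\<xi> * z \<in> Gamma_reg \<beta> \<xi> \<longleftrightarrow> z \<in> Gamma_reg \<beta> 1"
proof -
  have c: "cnj \<xi> * \<xi> = 1"
    using mult_cnj_eq_1[OF \<xi>] by (simp only: mult.commute)
  show ?thesis
    unfolding Gamma_reg_iff[OF assms] Gamma_reg_iff[OF norm_one assms(2)]
  proof
    assume "\<exists>w (s::real). cmod w < \<beta> \<and> 0 \<le> s \<and> s < 1 \<and> \<xi> * z = of_real (1 - s) * w + of_real s * \<xi>"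
    then obtain w and s :: real where ws: "cmod w < \<beta>" "0 \<le> s" "s < 1"
      and rotated: "\<xi> * z = of_real (1 - s) * w + of_real s * \<xi>"
      by blast
    have "z = cnj \<xi> * (\<xi> * z)" using c by (simp add: mult.assoc[symmetric])
    also have "\<dots> = of_real (1 - s) * (cnj \<xi> * w) + of_real s * (cnj \<xi> * \<xi>)"
      unfolding rotated by (simp only: distrib_left mult.left_commute)
    finally show "\<exists>w (s::real). cmod w < \<beta> \<and> 0 \<le> s \<and> s < 1 \<and> z = of_real (1 - s) * w + of_real s * 1"
      using c \<xi> ws by (intro exI[of _ "cnj \<xi> * w"] exI[of _ s]) (auto simp: norm_mult)
  next
    assume "\<exists>w (s::real). cmod w < \<beta> \<and> 0 \<le> s \<and> s < 1 \<and> z = of_real (1 - s) * w + of_real s * 1"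
    then obtain w and s :: real where ws: "cmod w < \<beta>" "0 \<le> s" "s < 1"
      and z: "z = of_real (1 - s) * w + of_real s * 1"
      by blast
    have "\<xi> * z = of_real (1 - s) * (\<xi> * w) + of_real s * \<xi>"
      unfolding z by (simp add: algebra_simps)
    then show "\<exists>w (s::real). cmod w < \<beta> \<and> 0 \<le> s \<and> s < 1 \<and> \<xi> * z = of_real (1 - s) * w + of_real s * \<xi>"
      using \<xi> ws by (intro exI[of _ "\<xi> * w"] exI[of _ s]) (auto simp: norm_mult)
  qed
qed

lemma sine_identity:
  fixes a b n :: real
  assumes n: "n = a^2 + b^2" "n > 0"
  shows "(1 - a / n * a)^2 + (a / n * b)^2 = b^2 / n"
proof -
  have "1 - a / n * a = (n - a * a) / n"
    using n(2) by (simp add: field_simps)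
  also have "n - a * a = b^2"
    using n(1) by (simp add: power2_eq_square)
  finally have "1 - a / n * a = b^2 / n" .
  moreover have "(b^2 / n)^2 + (a / n * b)^2 = b^2 * (a^2 + b^2) / n^2"
    by (simp add: power2_eq_square add_divide_distrib algebra_simps)
  ultimately show ?thesis
    using n by (simp add: power2_eq_square)
qed

text \<open>The point \<open>w = 1 - t u\<close> with \<open>t = Re u / \<bar>u\<bar>\<^sup>2 \<ge> 1\<close> is the foot of the perpendicular from
  \<open>0\<close> to the line through \<open>1\<close> and \<open>1 - u\<close>, so \<open>1 - u \<in> [w, 1)\<close> and
  \<open>\<bar>w\<bar> = \<bar>Im u\<bar> / \<bar>u\<bar> < T / sqrt (1 + T\<^sup>2)\<close>.\<close>
lemma one_minus_mem_Gamma_reg_one: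
  fixes u :: complex and T \<beta> :: real
  assumes sector: "\<bar>Im u\<bar> < T * Re u" and disc: "(cmod u)^2 \<le> Re u"
    and \<beta>: "sqrt (T^2 / (1 + T^2)) \<le> \<beta>" "\<beta> \<le> 1"
  shows "1 - u \<in> Gamma_reg \<beta> 1"
proof -
  have u_sq: "(cmod u)^2 = (Re u)^2 + (Im u)^2" by (simp add: cmod_power2)
  have "0 < T * Re u" using sector by linarith
  then have "Re u \<noteq> 0" by auto
  then have u: "0 < (cmod u)^2" by (simp add: u_sq add_pos_nonneg)
  define t where "t = Re u / (cmod u)^2"
  have t: "1 \<le> t" using disc u by (simp add: t_def)
  define \<sigma> where "\<sigma> = 1 - 1 / t"
  define w where "w = 1 - t * u"
  have "(cmod w)^2 = (1 - t * Re u)^2 + (t * Im u)^2" by (simp add: w_def cmod_power2)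
  also have "\<dots> = (Im u)^2 / (cmod u)^2"
    unfolding t_def by (rule sine_identity[OF u_sq u])
  also have "\<dots> < T^2 / (1 + T^2)"
  proof -
    have "(Im u)^2 < (T * Re u)^2"
      using power_strict_mono[OF sector, of 2] by simp
    then have "(Im u)^2 * (1 + T^2) < T^2 * (cmod u)^2"
      unfolding u_sq by (simp add: algebra_simps power_mult_distrib)
    then show ?thesis
      using u by (simp add: field_simps add_pos_nonneg)
  qed
  finally have "cmod w < \<beta>"
    using \<beta>(1) real_less_rsqrt by fastforce
  moreover have "1 - u = of_real (1 - \<sigma>) * w + of_real \<sigma> * 1"
    using t by (simp add: \<sigma>_def w_def field_simps)
  moreover have "0 \<le> \<sigma>" "\<sigma> < 1" using t by (auto simp: \<sigma>_def)
  ultimately show ?thesis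
    unfolding Gamma_reg_iff[OF norm_one \<beta>(2)] by blast
qed

lemma Gamma_reg_half_one_nontangential:
  assumes "\<alpha> \<in> Gamma_reg (1/2) 1"
  shows "cmod (1 - \<alpha>) < 3 * (1 - cmod \<alpha>)" "\<bar>Im (1 - \<alpha>)\<bar> < Re (1 - \<alpha>)"
proof -
  obtain w and s :: real where w: "cmod w < 1/2" and s: "0 \<le> s" "s < 1"
    and \<alpha>: "\<alpha> = of_real (1 - s) * w + of_real s"
    using assms Gamma_reg_iff[of 1 "1/2" \<alpha>] by auto
  have "cmod \<alpha> \<le> (1 - s) * cmod w + s"
    using norm_triangle_ineq[of "of_real (1 - s) * w" "of_real s"] s by (simp add: \<alpha> norm_mult)
  moreover have "(1 - s) * cmod w \<le> (1 - s) / 2"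
    using w s mult_left_mono[of "cmod w" "1/2" "1 - s"] by simp
  ultimately have \<alpha>_norm: "(1 - s) / 2 \<le> 1 - cmod \<alpha>" by argo
  have v: "1 - \<alpha> = of_real (1 - s) * (1 - w)" by (simp add: \<alpha> algebra_simps)
  have "cmod (1 - \<alpha>) = (1 - s) * cmod (1 - w)" using s by (simp add: v norm_mult)
  also have "\<dots> \<le> (1 - s) * (1 + cmod w)"
    using s norm_triangle_ineq4[of 1 w] by (intro mult_left_mono) auto
  also have "\<dots> < (1 - s) * (3/2)" using s w by (intro mult_strict_left_mono) auto
  finally show "cmod (1 - \<alpha>) < 3 * (1 - cmod \<alpha>)" using \<alpha>_norm by argo
  have "\<bar>Im w\<bar> < 1 - Re w"
    using w abs_Im_le_cmod[of w] complex_Re_le_cmod[of w] by linarith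
  then have "(1 - s) * \<bar>Im w\<bar> < (1 - s) * (1 - Re w)"
    using s by (intro mult_strict_left_mono) auto
  then show "\<bar>Im (1 - \<alpha>)\<bar> < Re (1 - \<alpha>)"
    using s by (simp add: v abs_mult)
qed

text \<open>Near the boundary, the neighbourhood \<open>\<bar>z - \<alpha>\<bar> < \<kappa> (1 - \<bar>\<alpha>\<bar>)\<close> puts \<open>u = 1 - z\<close> in a sector at \<open>0\<close>
  and, being small compared to \<open>1 - \<bar>\<alpha>\<bar>\<close>, inside the disc \<open>\<bar>u\<bar>\<^sup>2 \<le> Re u\<close>.\<close>
lemma Gamma_reg_one_absorbs_ball_near_boundary:
  fixes \<kappa> \<beta> :: real
  assumes \<kappa>: "0 < \<kappa>" "\<kappa> < 1" and \<alpha>: "\<alpha> \<in> Gamma_reg (1/2) 1"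
    and z: "cmod (z - \<alpha>) < \<kappa> * (1 - cmod \<alpha>)" and near: "1 - cmod \<alpha> < (1 - \<kappa>) / 16"
    and \<beta>: "sqrt (((1 + \<kappa>) / (1 - \<kappa>))^2 / (1 + ((1 + \<kappa>) / (1 - \<kappa>))^2)) \<le> \<beta>" "\<beta> \<le> 1"
  shows "z \<in> Gamma_reg \<beta> 1"
proof -
  define \<delta> where "\<delta> = 1 - cmod \<alpha>"
  define v where "v = 1 - \<alpha>"
  define d where "d = \<alpha> - z"
  have v: "cmod v < 3 * \<delta>" "\<bar>Im v\<bar> < Re v"
    using Gamma_reg_half_one_nontangential[OF \<alpha>] by (simp_all add: v_def \<delta>_def)
  have Re_v: "\<delta> \<le> Re v" unfolding v_def \<delta>_def using complex_Re_le_cmod[of \<alpha>] by simp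
  have d: "cmod d < \<kappa> * \<delta>" using z by (simp add: d_def \<delta>_def norm_minus_commute)
  have "0 < \<kappa> * \<delta>" using d norm_ge_zero[of d] by linarith
  then have \<delta>: "0 < \<delta>" using \<kappa> by (simp add: zero_less_mult_iff)
  have "\<kappa> * \<delta> \<le> \<kappa> * Re v" using Re_v \<kappa> by (intro mult_left_mono) auto
  then have Re_u: "(1 - \<kappa>) * Re v < Re (v + d)" and Im_u: "\<bar>Im (v + d)\<bar> < (1 + \<kappa>) * Re v"
    using d v(2) abs_Re_le_cmod[of d] abs_Im_le_cmod[of d] abs_triangle_ineq[of "Im v" "Im d"]
    by (auto simp: algebra_simps)
  have "\<bar>Im (v + d)\<bar> < (1 + \<kappa>) / (1 - \<kappa>) * Re (v + d)"
  proof -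
    have "(1 + \<kappa>) * Re v = (1 + \<kappa>) / (1 - \<kappa>) * ((1 - \<kappa>) * Re v)" using \<kappa> by simp
    also have "\<dots> \<le> (1 + \<kappa>) / (1 - \<kappa>) * Re (v + d)" using Re_u \<kappa> by (intro mult_left_mono) auto
    finally show ?thesis using Im_u by linarith
  qed
  moreover have "(cmod (v + d))^2 \<le> Re (v + d)"
  proof -
    have "\<kappa> * \<delta> < 1 * \<delta>" using \<kappa> \<delta> by (intro mult_strict_right_mono) auto
    then have "cmod (v + d) < 4 * \<delta>"
      using v(1) d norm_triangle_ineq[of v d] by simp
    then have "(cmod (v + d))^2 \<le> 16 * \<delta> * \<delta>"
      using power_mono[of "cmod (v + d)" "4 * \<delta>" 2] by (simp add: power2_eq_square)
    also have "\<dots> \<le> (1 - \<kappa>) * \<delta>"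
      using near \<delta> by (intro mult_right_mono) (auto simp: \<delta>_def)
    also have "\<dots> \<le> (1 - \<kappa>) * Re v" using Re_v \<kappa> by (intro mult_left_mono) auto
    finally show ?thesis using Re_u by linarith
  qed
  ultimately have "1 - (v + d) \<in> Gamma_reg \<beta> 1"
    by (rule one_minus_mem_Gamma_reg_one[OF _ _ \<beta>])
  then show ?thesis by (simp add: v_def d_def)
qed

lemma Gamma_reg_absorbs_hyperbolic_balls:
  fixes \<kappa> :: real
  assumes \<kappa>: "0 < \<kappa>" "\<kappa> < 1"
  obtains \<beta> where "1/2 < \<beta>" "\<beta> < 1"
    "\<And>\<xi> \<alpha> z. cmod \<xi> = 1 \<Longrightarrow> \<alpha> \<in> Gamma_reg (1/2) \<xi> \<Longrightarrow> cmod (z - \<alpha>) < \<kappa> * (1 - cmod \<alpha>) \<Longrightarrow>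
       z \<in> Gamma_reg \<beta> \<xi>"
proof
  define T where "T = (1 + \<kappa>) / (1 - \<kappa>)"
  define \<beta> where "\<beta> = max (3/4) (max (\<kappa> + (1 - \<kappa>) * (1 - (1 - \<kappa>) / 16)) (sqrt (T^2 / (1 + T^2))))"
  have "3/4 \<le> \<beta>" unfolding \<beta>_def by (rule max.cobounded1)
  then show "1/2 < \<beta>" by simp
  have "0 < (1 - \<kappa>) * ((1 - \<kappa>) / 16)" using \<kappa> by simp
  then have "\<kappa> + (1 - \<kappa>) * (1 - (1 - \<kappa>) / 16) < 1"
    by (simp add: algebra_simps)
  moreover have "T^2 / (1 + T^2) < 1" by (simp add: add_pos_nonneg)
  ultimately show \<beta>: "\<beta> < 1" by (simp add: \<beta>_def)
  fix \<xi> \<alpha> z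
  assume \<xi>: "cmod \<xi> = 1" and \<alpha>: "\<alpha> \<in> Gamma_reg (1/2) \<xi>" and z: "cmod (z - \<alpha>) < \<kappa> * (1 - cmod \<alpha>)"
  show "z \<in> Gamma_reg \<beta> \<xi>"
  proof (cases "cmod \<alpha> \<le> 1 - (1 - \<kappa>) / 16")
    case True
    have "cmod z \<le> cmod \<alpha> + cmod (z - \<alpha>)" by (metis norm_triangle_sub add.commute)
    also have "\<dots> < \<kappa> + (1 - \<kappa>) * cmod \<alpha>" using z by (simp add: algebra_simps)
    also have "\<dots> \<le> \<kappa> + (1 - \<kappa>) * (1 - (1 - \<kappa>) / 16)"
      using True \<kappa> by (intro add_left_mono mult_left_mono) auto
    also have "\<dots> \<le> \<beta>" by (simp add: \<beta>_def)
    finally show ?thesis by (simp add: Gamma_reg_def)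
  next
    case False
    have c: "\<xi> * cnj \<xi> = 1"
      using \<xi> by (rule mult_cnj_eq_1)
    have unrotate: "\<xi> * (cnj \<xi> * x) = x" for x
      using c by (simp add: mult.assoc[symmetric])
    have norm_rotate: "cmod (cnj \<xi> * x) = cmod x" for x
      using \<xi> by (simp add: norm_mult)
    have "cnj \<xi> * \<alpha> \<in> Gamma_reg (1/2) 1"
      using rotate_mem_Gamma_reg_iff[OF \<xi>, of "1/2" "cnj \<xi> * \<alpha>"] \<alpha> by (simp add: unrotate)
    then have "cnj \<xi> * z \<in> Gamma_reg \<beta> 1"
    proof (rule Gamma_reg_one_absorbs_ball_near_boundary[OF \<kappa>])
      show "cmod (cnj \<xi> * z - cnj \<xi> * \<alpha>) < \<kappa> * (1 - cmod (cnj \<xi> * \<alpha>))"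
        using z by (simp add: norm_rotate flip: right_diff_distrib)
      show "1 - cmod (cnj \<xi> * \<alpha>) < (1 - \<kappa>) / 16"
        unfolding norm_rotate using False by argo
      show "sqrt (((1 + \<kappa>) / (1 - \<kappa>))^2 / (1 + ((1 + \<kappa>) / (1 - \<kappa>))^2)) \<le> \<beta>"
        by (simp add: \<beta>_def T_def)
    qed (use \<beta> in simp)
    then show ?thesis
      using rotate_mem_Gamma_reg_iff[OF \<xi>, of \<beta> "cnj \<xi> * z"] \<beta> by (simp add: unrotate)
  qed
qed

section \<open>Local averages\<close>

lemma norm_powr_le_local_integral:
  fixes f :: "complex \<Rightarrow> complex"
  assumes hol: "f holomorphic_on unit_disc" and \<eta>: "0 < \<eta>" "\<eta> < 1" and p: "1 \<le> p"
    and \<alpha>: "\<alpha> \<in> unit_disc" and w: "w \<in> Delta \<eta> \<alpha>"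
  shows "ennreal (cmod (f w) powr p) \<le> ennreal (4 * (32/pi) powr p / ((1 - \<eta>)^2 * (1 - cmod \<alpha>)^2)) *
    (\<integral>\<^sup>+z. ennreal (cmod (f z) powr p) * indicator (ball \<alpha> ((1 + \<eta>) / 2 * (1 - cmod \<alpha>))) z \<partial>lborel)"
proof -
  define \<delta> where "\<delta> = 1 - cmod \<alpha>"
  define r where "r = (1 - \<eta>) / 4 * \<delta>"
  have \<delta>: "0 < \<delta>" using \<alpha> by (simp add: \<delta>_def unit_disc_def)
  have r: "0 < r" using \<eta> \<delta> by (simp add: r_def)
  have w_\<alpha>: "dist w \<alpha> < \<eta> * \<delta>" using w by (simp add: Delta_def \<delta>_def dist_norm)
  have "ball w ((1 - \<eta>) * \<delta>) \<subseteq> ball 0 1"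
    using w_\<alpha> dist_triangle[of w 0 \<alpha>] by (subst ball_subset_ball_iff) (simp add: \<delta>_def algebra_simps)
  then have "f holomorphic_on ball w ((1 - \<eta>) * \<delta>)"
    using hol unfolding unit_disc_def by (rule holomorphic_on_subset[rotated])
  then have "ennreal (cmod (f w) powr p) \<le> ennreal ((32/pi) powr p / (4 * r^2)) *
     (\<integral>\<^sup>+z. ennreal (cmod (f z) powr p) * indicator (cbox (w - Complex r r) (w + Complex r r)) z \<partial>lborel)"
    using r \<eta> \<delta> by (intro norm_powr_le_square_average p) (auto simp: r_def)
  also have "\<dots> \<le> ennreal ((32/pi) powr p / (4 * r^2)) *
     (\<integral>\<^sup>+z. ennreal (cmod (f z) powr p) * indicator (ball \<alpha> ((1 + \<eta>) / 2 * \<delta>)) z \<partial>lborel)"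
  proof -
    have "cbox (w - Complex r r) (w + Complex r r) \<subseteq> ball w ((1 + \<eta>) / 2 * \<delta> - dist w \<alpha>)"
      using w_\<alpha> by (intro square_subset_ball) (simp add: r_def field_simps)
    also have "\<dots> \<subseteq> ball \<alpha> ((1 + \<eta>) / 2 * \<delta>)"
      by (rule ball_subset_ball_iff[THEN iffD2]) simp
    finally show ?thesis
      by (intro mult_left_mono nn_integral_mono) (auto simp: indicator_def)
  qed
  also have "(32/pi) powr p / (4 * r^2) = 4 * (32/pi) powr p / ((1 - \<eta>)^2 * \<delta>^2)"
    by (simp add: r_def power_mult_distrib power_divide mult_ac)
  finally show ?thesis by (simp add: \<delta>_def)
qed

lemma B_avg_le:
  fixes f :: "complex \<Rightarrow> complex"
  assumes hol: "f holomorphic_on unit_disc"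
    and bound: "\<And>w. w \<in> Delta \<eta> \<alpha> \<Longrightarrow> ennreal (cmod (f w) powr p) \<le> A"
  shows "B_avg p \<eta> lam f \<alpha> \<le> A"
proof -
  define E where "E = E_set p \<eta> lam f \<alpha>"
  define g where "g z = indicator unit_disc z *\<^sub>R cmod (f z)" for z
  have "continuous_on unit_disc f"
    using hol holomorphic_on_imp_continuous_on by blast
  then have [measurable]: "g \<in> borel_measurable borel"
    unfolding g_def[abs_def]
    by (intro borel_measurable_continuous_on_indicator continuous_intros) (auto simp: unit_disc_def)
  have "E = unit_disc \<inter> ball \<alpha> (\<eta> * (1 - cmod \<alpha>)) \<inter> {z. lam * cmod (f \<alpha>) powr p \<le> g z powr p}"
    by (auto simp: E_def E_set_def g_def Delta_def dist_norm norm_minus_commute)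
  then have [measurable]: "E \<in> sets borel"
    by (simp add: unit_disc_def)
  define X where "X = (\<integral>\<^sup>+z. ennreal (cmod (f z) powr p) * indicator E z \<partial>lborel)"
  define Y where "Y = emeasure lborel E"
  have "X \<le> (\<integral>\<^sup>+z. A * indicator E z \<partial>lborel)"
    unfolding X_def using bound
    by (intro nn_integral_mono) (auto simp: E_def E_set_def indicator_def)
  also have "\<dots> = A * Y" by (simp add: Y_def nn_integral_cmult_indicator)
  finally have "X / ennreal pi \<le> A * (Y / ennreal pi)"
    by (metis divide_right_mono_ennreal ennreal_times_divide)
  moreover have "B_avg p \<eta> lam f \<alpha> = (X / ennreal pi) / (Y / ennreal pi)"
    by (simp add: B_avg_def area_int_def area_m_def X_def Y_def E_def)
  ultimately show ?thesis
  proof (cases "Y = 0")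
    case False
    then have "0 < Y / ennreal pi"
      by (simp add: ennreal_zero_less_divide zero_less_iff_neq_zero)
    then show ?thesis
      using \<open>X / ennreal pi \<le> A * (Y / ennreal pi)\<close> \<open>B_avg p \<eta> lam f \<alpha> = _\<close>
      by (simp add: divide_le_posI_ennreal mult.commute)
  qed simp
qed

section \<open>Exchanging the order of integration\<close>

lemma nn_integral_le_via_kernel:
  fixes K :: "'a::euclidean_space \<times> 'b::euclidean_space \<Rightarrow> ennreal"
  assumes "K \<in> borel_measurable borel"
    and "\<And>a. G a \<le> (\<integral>\<^sup>+z. K (a, z) \<partial>lborel)" and "\<And>z. (\<integral>\<^sup>+a. K (a, z) \<partial>lborel) \<le> H z"
  shows "(\<integral>\<^sup>+a. G a \<partial>lborel) \<le> (\<integral>\<^sup>+z. H z \<partial>lborel)"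
proof -
  have "(\<integral>\<^sup>+a. G a \<partial>lborel) \<le> (\<integral>\<^sup>+a. (\<integral>\<^sup>+z. K (a, z) \<partial>lborel) \<partial>lborel)"
    using assms(2) by (rule nn_integral_mono)
  also have "\<dots> = (\<integral>\<^sup>+z. (\<integral>\<^sup>+a. K (a, z) \<partial>lborel) \<partial>lborel)"
    using assms(1)
    by (intro pair_sigma_finite.Fubini'[symmetric])
       (auto simp: lborel_prod pair_sigma_finite_def lborel.sigma_finite_measure_axioms)
  also have "\<dots> \<le> (\<integral>\<^sup>+z. H z \<partial>lborel)"
    using assms(3) by (rule nn_integral_mono)
  finally show ?thesis .
qed

text \<open>The kernel \<open>K(a, z) = F(z) / (1 - \<bar>z\<bar>)\<^sup>3\<close> on \<open>\<bar>a - z\<bar> < \<kappa> / (1 - \<kappa>) (1 - \<bar>z\<bar>)\<close>: its integral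
  in \<open>a\<close> is of size \<open>F(z) / (1 - \<bar>z\<bar>)\<close>, while its integral in \<open>z\<close> dominates the local integral
  of \<open>F\<close> around \<open>a\<close> divided by \<open>(1 - \<bar>a\<bar>)\<^sup>3\<close>.\<close>
definition hyperbolic_swap_kernel :: "real \<Rightarrow> (complex \<Rightarrow> real) \<Rightarrow> complex \<times> complex \<Rightarrow> ennreal" where
  "hyperbolic_swap_kernel \<kappa> F = (\<lambda>(a, z).
     ennreal (F z / (1 - cmod z)^3) * indicator (ball z (\<kappa> / (1 - \<kappa>) * (1 - cmod z))) a)"

lemma borel_measurable_hyperbolic_swap_kernel:
  assumes "F \<in> borel_measurable borel"
  shows "hyperbolic_swap_kernel \<kappa> F \<in> borel_measurable borel"
proof -
  define c where "c = \<kappa> / (1 - \<kappa>)"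
  have "open {x::complex \<times> complex. dist (snd x) (fst x) < c * (1 - cmod (snd x))}"
    by (intro open_Collect_less continuous_intros)
  then have "(\<lambda>x. indicator {x::complex \<times> complex. dist (snd x) (fst x) < c * (1 - cmod (snd x))} x
      :: ennreal) \<in> borel_measurable borel"
    by (intro borel_measurable_indicator) simp
  then have "(\<lambda>x::complex \<times> complex. indicator (ball (snd x) (c * (1 - cmod (snd x)))) (fst x)
      :: ennreal) \<in> borel_measurable borel"
    by (simp add: indicator_def)
  moreover have "(\<lambda>x::complex \<times> complex. ennreal (F (snd x) / (1 - cmod (snd x))^3))
      \<in> borel_measurable borel"
  proof -
    have "(\<lambda>z. ennreal (F z / (1 - cmod z)^3)) \<in> borel_measurable borel"
      using assms by measurable
    moreover have "(snd :: complex \<times> complex \<Rightarrow> complex) \<in> borel_measurable borel"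
      by (intro borel_measurable_continuous_onI continuous_intros)
    ultimately show ?thesis
      using measurable_compose by blast
  qed
  ultimately show ?thesis
    unfolding hyperbolic_swap_kernel_def split_beta' c_def[symmetric]
    by (rule borel_measurable_times_ennreal[rotated])
qed

lemma emeasure_ball_complex: "0 \<le> r \<Longrightarrow> emeasure lborel (ball (z::complex) r) = ennreal (pi * r^2)"
  using emeasure_ball[of r z] Gamma_fact[of 1, where 'a=real] by (simp add: unit_ball_vol_def)

lemma nn_integral_hyperbolic_swap_kernel_fst:
  assumes \<kappa>: "0 \<le> \<kappa>" "\<kappa> < 1" and F: "0 \<le> F z"
  shows "(\<integral>\<^sup>+a. hyperbolic_swap_kernel \<kappa> F (a, z) \<partial>lborel)
    \<le> ennreal (pi * (\<kappa> / (1 - \<kappa>))^2) * ennreal (F z / (1 - cmod z))"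
proof (cases "0 < 1 - cmod z")
  case True
  have "(\<integral>\<^sup>+a. hyperbolic_swap_kernel \<kappa> F (a, z) \<partial>lborel)
      = ennreal (F z / (1 - cmod z)^3) * emeasure lborel (ball z (\<kappa> / (1 - \<kappa>) * (1 - cmod z)))"
    by (simp add: hyperbolic_swap_kernel_def nn_integral_cmult_indicator)
  also have "\<dots> = ennreal (F z / (1 - cmod z)^3 * (pi * (\<kappa> / (1 - \<kappa>) * (1 - cmod z))^2))"
    using True \<kappa> F by (simp add: emeasure_ball_complex flip: ennreal_mult)
  also have "F z / (1 - cmod z)^3 * (pi * (\<kappa> / (1 - \<kappa>) * (1 - cmod z))^2)
      = pi * (\<kappa> / (1 - \<kappa>))^2 * (F z / (1 - cmod z))"
    using True by (simp add: power_mult_distrib power2_eq_square power3_eq_cube mult_ac)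
  also have "ennreal \<dots> = ennreal (pi * (\<kappa> / (1 - \<kappa>))^2) * ennreal (F z / (1 - cmod z))"
    by (rule ennreal_mult') simp
  finally show ?thesis by simp
next
  case False
  then have "\<kappa> / (1 - \<kappa>) * (1 - cmod z) \<le> 0"
    using \<kappa> by (intro mult_nonneg_nonpos) auto
  then have "\<not> dist z a < \<kappa> / (1 - \<kappa>) * (1 - cmod z)" for a
    using zero_le_dist[of z a] by linarith
  then show ?thesis
    by (simp add: hyperbolic_swap_kernel_def indicator_def)
qed

text \<open>Every \<open>z\<close> with \<open>\<bar>z - a\<bar> < \<kappa> (1 - \<bar>a\<bar>)\<close> satisfies
  \<open>(1 - \<kappa>) (1 - \<bar>a\<bar>) < 1 - \<bar>z\<bar> < (1 + \<kappa>) (1 - \<bar>a\<bar>)\<close>.\<close>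
lemma nn_integral_ball_le_hyperbolic_swap_kernel:
  assumes \<kappa>: "0 < \<kappa>" "\<kappa> < 1" and a: "cmod a < 1"
    and F: "F \<in> borel_measurable borel" "\<And>z. 0 \<le> F z"
  shows "ennreal (1 / (1 - cmod a)^3) *
      (\<integral>\<^sup>+z. ennreal (F z) * indicator (ball a (\<kappa> * (1 - cmod a))) z \<partial>lborel)
    \<le> ennreal ((1 + \<kappa>)^3) * (\<integral>\<^sup>+z. hyperbolic_swap_kernel \<kappa> F (a, z) \<partial>lborel)"
proof -
  define \<delta> where "\<delta> z = 1 - cmod z" for z
  have \<delta>a: "0 < \<delta> a" using a by (simp add: \<delta>_def)
  have pointwise: "ennreal (1 / \<delta> a ^ 3) * (ennreal (F z) * indicator (ball a (\<kappa> * \<delta> a)) z)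
      \<le> ennreal ((1 + \<kappa>)^3) * hyperbolic_swap_kernel \<kappa> F (a, z)" for z
  proof (cases "z \<in> ball a (\<kappa> * \<delta> a)")
    case True
    then have z_a: "cmod (z - a) < \<kappa> * \<delta> a" by (simp add: dist_norm norm_minus_commute)
    have lower: "(1 - \<kappa>) * \<delta> a < \<delta> z" and upper: "\<delta> z < (1 + \<kappa>) * \<delta> a"
      using z_a norm_triangle_ineq2[of z a] norm_triangle_ineq3[of z a]
      by (auto simp: \<delta>_def algebra_simps norm_minus_commute)
    have \<delta>z: "0 < \<delta> z" using lower \<kappa> \<delta>a by (smt (verit) mult_pos_pos)
    have "\<kappa> * ((1 - \<kappa>) * \<delta> a) \<le> \<kappa> * \<delta> z" using lower \<kappa> by (intro mult_left_mono) auto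
    then have "\<kappa> * \<delta> a \<le> \<kappa> / (1 - \<kappa>) * \<delta> z"
      using \<kappa> by (simp add: field_simps)
    then have "a \<in> ball z (\<kappa> / (1 - \<kappa>) * \<delta> z)"
      using z_a by (simp add: dist_norm norm_minus_commute)
    moreover have "1 / \<delta> a ^ 3 \<le> (1 + \<kappa>)^3 / \<delta> z ^ 3"
    proof -
      have "1 / \<delta> a ^ 3 = (1 + \<kappa>)^3 / ((1 + \<kappa>) * \<delta> a)^3" using \<kappa> by (simp add: power_mult_distrib)
      also have "\<dots> \<le> (1 + \<kappa>)^3 / \<delta> z ^ 3"
        using \<kappa> \<delta>z upper by (intro divide_left_mono power_mono mult_pos_pos) auto
      finally show ?thesis .
    qed
    then have "1 / \<delta> a ^ 3 * F z \<le> (1 + \<kappa>)^3 / \<delta> z ^ 3 * F z"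
      using F(2)[of z] by (rule mult_right_mono)
    then have "ennreal (1 / \<delta> a ^ 3) * ennreal (F z) \<le> ennreal ((1 + \<kappa>)^3) * ennreal (F z / \<delta> z ^ 3)"
      using \<delta>a \<delta>z \<kappa> F(2)[of z] by (simp add: ennreal_leI flip: ennreal_mult)
    ultimately show ?thesis
      using True by (simp add: hyperbolic_swap_kernel_def \<delta>_def)
  qed (simp add: hyperbolic_swap_kernel_def)
  have "hyperbolic_swap_kernel \<kappa> F \<in> borel_measurable (lborel \<Otimes>\<^sub>M lborel)"
    using borel_measurable_hyperbolic_swap_kernel[OF F(1)] by (simp add: lborel_prod)
  then have kernel: "(\<lambda>z. hyperbolic_swap_kernel \<kappa> F (a, z)) \<in> borel_measurable lborel"
    by (rule measurable_Pair2) simp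
  have "ennreal (1 / \<delta> a ^ 3) * (\<integral>\<^sup>+z. ennreal (F z) * indicator (ball a (\<kappa> * \<delta> a)) z \<partial>lborel)
      = (\<integral>\<^sup>+z. ennreal (1 / \<delta> a ^ 3) * (ennreal (F z) * indicator (ball a (\<kappa> * \<delta> a)) z) \<partial>lborel)"
    using F(1) by (intro nn_integral_cmult[symmetric] borel_measurable_times_ennreal
        borel_measurable_indicator) auto
  also have "\<dots> \<le> (\<integral>\<^sup>+z. ennreal ((1 + \<kappa>)^3) * hyperbolic_swap_kernel \<kappa> F (a, z) \<partial>lborel)"
    by (intro nn_integral_mono pointwise)
  also have "\<dots> = ennreal ((1 + \<kappa>)^3) * (\<integral>\<^sup>+z. hyperbolic_swap_kernel \<kappa> F (a, z) \<partial>lborel)"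
    using kernel by (rule nn_integral_cmult)
  finally show ?thesis by (simp add: \<delta>_def)
qed

lemma area_int_le_local_integrals:
  fixes F g :: "complex \<Rightarrow> real" and S T :: "complex set" and \<kappa> c :: real
  assumes F: "(\<lambda>z. indicator T z * F z) \<in> borel_measurable borel" "\<And>z. 0 \<le> F z"
    and \<kappa>: "0 < \<kappa>" "\<kappa> < 1" and c: "0 \<le> c"
    and S: "\<And>a. a \<in> S \<Longrightarrow> cmod a < 1 \<and> ball a (\<kappa> * (1 - cmod a)) \<subseteq> T"
    and g: "\<And>a. a \<in> S \<Longrightarrow> ennreal (g a) \<le> ennreal (c / (1 - cmod a)^2) *
              (\<integral>\<^sup>+z. ennreal (F z) * indicator (ball a (\<kappa> * (1 - cmod a))) z \<partial>lborel)"
  shows "area_int S (\<lambda>a. g a / (1 - cmod a))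
    \<le> ennreal (pi * c * (1 + \<kappa>)^3 * (\<kappa> / (1 - \<kappa>))^2) * area_int T (\<lambda>z. F z / (1 - cmod z))"
proof -
  define FT where "FT z = indicator T z * F z" for z
  define C where "C = c * (1 + \<kappa>)^3"
  define K where "K x = ennreal C * hyperbolic_swap_kernel \<kappa> FT x" for x
  have FT: "FT \<in> borel_measurable borel" "\<And>z. 0 \<le> FT z"
    using F by (simp_all add: FT_def[abs_def])
  have kernel: "hyperbolic_swap_kernel \<kappa> FT \<in> borel_measurable (lborel \<Otimes>\<^sub>M lborel)"
    using borel_measurable_hyperbolic_swap_kernel[OF FT(1)] by (simp add: lborel_prod)
  have FT_\<delta>: "ennreal (FT z / (1 - cmod z)) = ennreal (F z / (1 - cmod z)) * indicator T z" for z
    by (simp add: FT_def indicator_def)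
  have "(\<integral>\<^sup>+a. ennreal (g a / (1 - cmod a)) * indicator S a \<partial>lborel)
      \<le> (\<integral>\<^sup>+z. ennreal (C * (pi * (\<kappa> / (1 - \<kappa>))^2)) * (ennreal (F z / (1 - cmod z)) * indicator T z) \<partial>lborel)"
  proof (rule nn_integral_le_via_kernel[of K])
    show "K \<in> borel_measurable borel"
      using kernel unfolding K_def[abs_def] by (simp add: lborel_prod)
    fix a
    show "ennreal (g a / (1 - cmod a)) * indicator S a \<le> (\<integral>\<^sup>+z. K (a, z) \<partial>lborel)"
    proof (cases "a \<in> S")
      case True
      have \<delta>a: "0 < 1 - cmod a" using S[OF True] by simp
      have "ennreal (g a / (1 - cmod a)) = ennreal (1 / (1 - cmod a)) * ennreal (g a)"
        using \<delta>a by (simp flip: ennreal_mult')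
      also have "\<dots> \<le> ennreal (1 / (1 - cmod a)) * (ennreal (c / (1 - cmod a)^2) *
          (\<integral>\<^sup>+z. ennreal (FT z) * indicator (ball a (\<kappa> * (1 - cmod a))) z \<partial>lborel))"
      proof -
        have "(\<integral>\<^sup>+z. ennreal (F z) * indicator (ball a (\<kappa> * (1 - cmod a))) z \<partial>lborel)
            = (\<integral>\<^sup>+z. ennreal (FT z) * indicator (ball a (\<kappa> * (1 - cmod a))) z \<partial>lborel)"
          using S[OF True] by (intro nn_integral_cong) (auto simp: FT_def indicator_def)
        then show ?thesis
          using g[OF True] by (intro mult_left_mono) simp_all
      qed
      also have "\<dots> = ennreal c * (ennreal (1 / (1 - cmod a)^3) *
          (\<integral>\<^sup>+z. ennreal (FT z) * indicator (ball a (\<kappa> * (1 - cmod a))) z \<partial>lborel))"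
        using \<delta>a c
        by (simp add: mult.assoc[symmetric] power3_eq_cube power2_eq_square flip: ennreal_mult)
      also have "\<dots> \<le> ennreal c * (ennreal ((1 + \<kappa>)^3) *
          (\<integral>\<^sup>+z. hyperbolic_swap_kernel \<kappa> FT (a, z) \<partial>lborel))"
        using S[OF True] by (intro mult_left_mono nn_integral_ball_le_hyperbolic_swap_kernel \<kappa> FT) auto
      also have "\<dots> = (\<integral>\<^sup>+z. K (a, z) \<partial>lborel)"
        using measurable_Pair2[OF kernel, of a] c
        by (simp add: K_def C_def nn_integral_cmult ennreal_mult'[OF c] mult.assoc)
      finally show ?thesis using True by simp
    qed simp
  next
    fix z
    have "(\<integral>\<^sup>+a. K (a, z) \<partial>lborel) = ennreal C * (\<integral>\<^sup>+a. hyperbolic_swap_kernel \<kappa> FT (a, z) \<partial>lborel)"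
      using measurable_Pair1[OF kernel, of z] by (simp add: K_def nn_integral_cmult)
    also have "\<dots> \<le> ennreal C * (ennreal (pi * (\<kappa> / (1 - \<kappa>))^2) * ennreal (FT z / (1 - cmod z)))"
      using \<kappa> FT(2) by (intro mult_left_mono nn_integral_hyperbolic_swap_kernel_fst) auto
    also have "\<dots> = ennreal (C * (pi * (\<kappa> / (1 - \<kappa>))^2)) * (ennreal (F z / (1 - cmod z)) * indicator T z)"
      using c \<kappa> by (simp add: FT_\<delta> C_def ennreal_mult mult.assoc)
    finally show "(\<integral>\<^sup>+a. K (a, z) \<partial>lborel) \<le> \<dots>" .
  qed
  also have "\<dots> = ennreal (C * (pi * (\<kappa> / (1 - \<kappa>))^2)) *
      (\<integral>\<^sup>+z. ennreal (F z / (1 - cmod z)) * indicator T z \<partial>lborel)"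
  proof (rule nn_integral_cmult)
    have "(\<lambda>z. ennreal (FT z / (1 - cmod z))) \<in> borel_measurable lborel"
      using FT(1) by measurable
    then show "(\<lambda>z. ennreal (F z / (1 - cmod z)) * indicator T z) \<in> borel_measurable lborel"
      by (simp add: FT_\<delta>)
  qed
  also have "C * (pi * (\<kappa> / (1 - \<kappa>))^2) = pi * c * (1 + \<kappa>)^3 * (\<kappa> / (1 - \<kappa>))^2"
    by (simp add: C_def)
  finally have "(\<integral>\<^sup>+a. ennreal (g a / (1 - cmod a)) * indicator S a \<partial>lborel) / ennreal pi
      \<le> ennreal (pi * c * (1 + \<kappa>)^3 * (\<kappa> / (1 - \<kappa>))^2) *
        (\<integral>\<^sup>+z. ennreal (F z / (1 - cmod z)) * indicator T z \<partial>lborel) / ennreal pi"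
    by (rule divide_right_mono_ennreal)
  then show ?thesis
    by (simp add: area_int_def ennreal_times_divide)
qed

lemma norm_powr_le_local_integral_of_lt_B_avg:
  fixes f :: "complex \<Rightarrow> complex"
  assumes hol: "f holomorphic_on unit_disc" and \<eta>: "0 < \<eta>" "\<eta> < 1" and p: "1 \<le> p"
    and \<epsilon>: "0 < \<epsilon>" "\<epsilon> < 1" and a: "a \<in> unit_disc"
    and small: "ennreal (cmod (f a) powr p) < ennreal (\<epsilon> powr (2 + 2 / p)) * B_avg p \<eta> lam f a"
  shows "ennreal (cmod (f a) powr p) \<le> ennreal (\<epsilon> * (4 * (32/pi) powr p / (1 - \<eta>)^2) / (1 - cmod a)^2) *
    (\<integral>\<^sup>+z. ennreal (cmod (f z) powr p) * indicator (ball a ((1 + \<eta>) / 2 * (1 - cmod a))) z \<partial>lborel)"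
proof -
  define K where "K = 4 * (32/pi) powr p / (1 - \<eta>)^2"
  define I where "I = (\<integral>\<^sup>+z. ennreal (cmod (f z) powr p) * indicator (ball a ((1 + \<eta>) / 2 * (1 - cmod a))) z \<partial>lborel)"
  have "ennreal (cmod (f a) powr p) \<le> ennreal (\<epsilon> powr (2 + 2 / p)) * B_avg p \<eta> lam f a"
    using small by simp
  also have "\<dots> \<le> ennreal \<epsilon> * B_avg p \<eta> lam f a"
    using \<epsilon> p powr_mono'[of 1 "2 + 2 / p" \<epsilon>] by (intro mult_right_mono ennreal_leI) auto
  also have "\<dots> \<le> ennreal \<epsilon> * (ennreal (K / (1 - cmod a)^2) * I)"
    using norm_powr_le_local_integral[OF hol \<eta> p a]
    by (intro mult_left_mono B_avg_le[OF hol]) (simp_all add: K_def I_def)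
  also have "\<dots> = ennreal (\<epsilon> * K / (1 - cmod a)^2) * I"
    using ennreal_mult'[of \<epsilon> "K / (1 - cmod a)^2"] \<epsilon> by (simp add: mult.assoc)
  finally show ?thesis by (simp add: K_def I_def)
qed

lemma area_int_bad_set_le:
  fixes f :: "complex \<Rightarrow> complex" and p \<eta> \<epsilon> \<beta> :: real
  defines "\<kappa> \<equiv> (1 + \<eta>) / 2"
  assumes p: "1 \<le> p" and \<eta>: "0 < \<eta>" "\<eta> < 1" and \<epsilon>: "0 < \<epsilon>" "\<epsilon> < 1"
    and hol: "f holomorphic_on unit_disc" and \<xi>: "cmod \<xi> = 1" and \<beta>: "\<beta> \<le> 1"
    and absorb: "\<And>\<alpha> z. \<alpha> \<in> Gamma_reg (1/2) \<xi> \<Longrightarrow> cmod (z - \<alpha>) < \<kappa> * (1 - cmod \<alpha>) \<Longrightarrow>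
      z \<in> Gamma_reg \<beta> \<xi>"
  shows "area_int ({\<alpha> \<in> unit_disc. ennreal (cmod (f \<alpha>) powr p)
              < ennreal (\<epsilon> powr (2 + 2 / p)) * B_avg p \<eta> lam f \<alpha>} \<inter> Gamma_reg (1/2) \<xi>)
            (\<lambda>z. cmod (f z) powr p / (1 - cmod z))
    \<le> ennreal (\<epsilon> * (pi * (4 * (32/pi) powr p / (1 - \<eta>)^2) * (1 + \<kappa>)^3 * (\<kappa> / (1 - \<kappa>))^2)) *
      area_int (Gamma_reg \<beta> \<xi>) (\<lambda>z. cmod (f z) powr p / (1 - cmod z))"
proof -
  have \<kappa>: "0 < \<kappa>" "\<kappa> < 1" using \<eta> by (simp_all add: \<kappa>_def)
  have \<Gamma>_disc: "Gamma_reg \<beta> \<xi> \<subseteq> unit_disc"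
    using \<xi> \<beta> by (rule Gamma_reg_subset_unit_disc)
  have "continuous_on (Gamma_reg \<beta> \<xi>) (\<lambda>z. cmod (f z) powr p)"
    using holomorphic_on_imp_continuous_on[OF holomorphic_on_subset[OF hol \<Gamma>_disc]] p
    by (intro continuous_on_powr' continuous_intros) auto
  then have "(\<lambda>z. indicator (Gamma_reg \<beta> \<xi>) z * cmod (f z) powr p) \<in> borel_measurable borel"
    using borel_measurable_continuous_on_indicator[of "Gamma_reg \<beta> \<xi>" "\<lambda>z. cmod (f z) powr p"]
      open_Gamma_reg[OF \<xi> \<beta>]
    by simp
  then have "area_int ({\<alpha> \<in> unit_disc. ennreal (cmod (f \<alpha>) powr p)
              < ennreal (\<epsilon> powr (2 + 2 / p)) * B_avg p \<eta> lam f \<alpha>} \<inter> Gamma_reg (1/2) \<xi>)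
            (\<lambda>z. cmod (f z) powr p / (1 - cmod z))
    \<le> ennreal (pi * (\<epsilon> * (4 * (32/pi) powr p / (1 - \<eta>)^2)) * (1 + \<kappa>)^3 * (\<kappa> / (1 - \<kappa>))^2) *
      area_int (Gamma_reg \<beta> \<xi>) (\<lambda>z. cmod (f z) powr p / (1 - cmod z))"
  proof (rule area_int_le_local_integrals[OF _ _ \<kappa>])
    fix a
    assume "a \<in> {\<alpha> \<in> unit_disc. ennreal (cmod (f \<alpha>) powr p)
              < ennreal (\<epsilon> powr (2 + 2 / p)) * B_avg p \<eta> lam f \<alpha>} \<inter> Gamma_reg (1/2) \<xi>"
    then show "cmod a < 1 \<and> ball a (\<kappa> * (1 - cmod a)) \<subseteq> Gamma_reg \<beta> \<xi>"
      and "ennreal (cmod (f a) powr p) \<le> ennreal (\<epsilon> * (4 * (32/pi) powr p / (1 - \<eta>)^2) / (1 - cmod a)^2) *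
        (\<integral>\<^sup>+z. ennreal (cmod (f z) powr p) * indicator (ball a (\<kappa> * (1 - cmod a))) z \<partial>lborel)"
      using absorb norm_powr_le_local_integral_of_lt_B_avg[OF hol \<eta> p \<epsilon>]
      by (auto simp: unit_disc_def dist_norm norm_minus_commute \<kappa>_def)
  qed (use \<epsilon> in simp_all)
  then show ?thesis
    by (simp only: mult_ac)
qed

theorem lemma3:
  fixes p \<eta> :: real
  assumes "1 \<le> p" and "0 < \<eta>" and "\<eta> < 1"
  shows "\<exists>\<beta> C2. 1/2 < \<beta> \<and> \<beta> < 1 \<and> C2 > 0 \<and>
    (\<forall>\<epsilon> lam (f :: complex \<Rightarrow> complex) \<xi>.
       0 < \<epsilon> \<and> \<epsilon> < 1 \<and> 0 < lam \<and> lam < 2 powr (- p) \<and>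
       f holomorphic_on unit_disc \<and> cmod \<xi> = 1 \<longrightarrow>
       (let B = {\<alpha> \<in> unit_disc.
                   ennreal (cmod (f \<alpha>) powr p) < ennreal (\<epsilon> powr (2 + 2 / p)) * B_avg p \<eta> lam f \<alpha>}
        in area_int (B \<inter> Gamma_reg (1/2) \<xi>) (\<lambda>z. cmod (f z) powr p / (1 - cmod z))
           \<le> ennreal (\<epsilon> * C2) * area_int (Gamma_reg \<beta> \<xi>) (\<lambda>z. cmod (f z) powr p / (1 - cmod z))))"
proof -
  define \<kappa> where "\<kappa> = (1 + \<eta>) / 2"
  have \<kappa>: "0 < \<kappa>" "\<kappa> < 1" using assms by (simp_all add: \<kappa>_def)
  obtain \<beta> where \<beta>: "1/2 < \<beta>" "\<beta> < 1"
    and absorb: "\<And>\<xi> \<alpha> z. cmod \<xi> = 1 \<Longrightarrow> \<alpha> \<in> Gamma_reg (1/2) \<xi> \<Longrightarrow>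
      cmod (z - \<alpha>) < \<kappa> * (1 - cmod \<alpha>) \<Longrightarrow> z \<in> Gamma_reg \<beta> \<xi>"
    using Gamma_reg_absorbs_hyperbolic_balls[OF \<kappa>] by blast
  define C2 where "C2 = pi * (4 * (32/pi) powr p / (1 - \<eta>)^2) * (1 + \<kappa>)^3 * (\<kappa> / (1 - \<kappa>))^2"
  have "C2 > 0" using assms \<kappa> by (simp add: C2_def)
  moreover have "area_int ({\<alpha> \<in> unit_disc. ennreal (cmod (f \<alpha>) powr p)
              < ennreal (\<epsilon> powr (2 + 2 / p)) * B_avg p \<eta> lam f \<alpha>} \<inter> Gamma_reg (1/2) \<xi>)
            (\<lambda>z. cmod (f z) powr p / (1 - cmod z))
      \<le> ennreal (\<epsilon> * C2) * area_int (Gamma_reg \<beta> \<xi>) (\<lambda>z. cmod (f z) powr p / (1 - cmod z))"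
    if "0 < \<epsilon> \<and> \<epsilon> < 1 \<and> 0 < lam \<and> lam < 2 powr (- p) \<and> f holomorphic_on unit_disc \<and> cmod \<xi> = 1"
    for \<epsilon> lam f \<xi>
    unfolding C2_def \<kappa>_def using that assms \<beta> absorb[unfolded \<kappa>_def]
    by (intro area_int_bad_set_le) auto
  ultimately show ?thesis
    using \<beta> unfolding Let_def by blast
qed

end
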